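(* Let $X$ be a closed subspace of a real Banach space $Y$ such that the pair $(X,Y)$ has the Daugavet property, and let $K$ be either $B(Y^* )$ or $\overline{\mathrm{ext}}\,B(Y^* )$, equipped with the weak$^*$ topology. Regard $X$ as a subspace of $C(K)$ via $x\mapsto (k\mapsto k(x))$. Then the pair $(X,C(K))$ has the Daugavet property.
   Context: $B(Y^* )$ is the closed unit ball of $Y^*$; $\overline{\mathrm{ext}}\,B(Y^* )$ denotes the weak$^*$ closure of the set of extreme points of $B(Y^* )$. If $X$ is a closed subspace of a Banach space $Y$ (or isometrically embedded in it) with inclusion $J$, the pair $(X,Y)$ has the Daugavet property if every bounded rank-one linear operator $T:X\to Y$ satisfies $\|J+T\|=1+\|T\|$. *)

theory Defs
  imports "HOL-Analysis.Analysis"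
begin

definition weak_star_topology :: "('y::real_normed_vector \<Rightarrow>\<^sub>L real) topology" where
  "weak_star_topology = pullback_topology UNIV blinfun_apply (product_topology (\<lambda>_. euclideanreal) UNIV)"

definition dual_ball :: "('y::real_normed_vector \<Rightarrow>\<^sub>L real) set" where
  "dual_ball = cball 0 1"

definition ext_closure_dual_ball :: "('y::real_normed_vector \<Rightarrow>\<^sub>L real) set" where
  "ext_closure_dual_ball = weak_star_topology closure_of {f. f extreme_point_of dual_ball}"

definition bounded_linear_on :: "'a::real_normed_vector set \<Rightarrow> ('a \<Rightarrow> 'b::real_normed_vector) \<Rightarrow> bool" where
  "bounded_linear_on X T \<longleftrightarrow>
     (\<forall>x\<in>X. \<forall>y\<in>X. T (x + y) = T x + T y) \<and> (\<forall>c. \<forall>x\<in>X. T (c *\<^sub>R x) = c *\<^sub>R T x) \<and>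
     (\<exists>M. \<forall>x\<in>X. norm (T x) \<le> M * norm x)"

definition op_norm_on :: "'a::real_normed_vector set \<Rightarrow> ('a \<Rightarrow> 'b::real_normed_vector) \<Rightarrow> real" where
  "op_norm_on X T = (SUP x\<in>X \<inter> cball 0 1. norm (T x))"

definition daugavet_pair :: "'y::real_normed_vector set \<Rightarrow> bool" where
  "daugavet_pair X \<longleftrightarrow>
     (\<forall>T. bounded_linear_on X T \<and> dim (T ` X) = 1 \<longrightarrow>
        op_norm_on X (\<lambda>x. x + T x) = 1 + op_norm_on X T)"

text \<open>The space C(K) for K \<subseteq> Y* with the weak-star topology, realised as functions on
  Y* whose values off K are irrelevant; sup norm over K.\<close>
definition CK :: "('y::real_normed_vector \<Rightarrow>\<^sub>L real) set \<Rightarrow> (('y \<Rightarrow>\<^sub>L real) \<Rightarrow> real) set" where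
  "CK K = {g. continuous_map (subtopology weak_star_topology K) euclideanreal g}"

definition CK_norm :: "('y::real_normed_vector \<Rightarrow>\<^sub>L real) set \<Rightarrow> (('y \<Rightarrow>\<^sub>L real) \<Rightarrow> real) \<Rightarrow> real" where
  "CK_norm K g = (SUP k\<in>K. \<bar>g k\<bar>)"

text \<open>Bounded linear operators X \<rightarrow> C(K) (equality in C(K) means equality on K).\<close>
definition bounded_linear_into_CK ::
  "'y::real_normed_vector set \<Rightarrow> ('y \<Rightarrow>\<^sub>L real) set \<Rightarrow> ('y \<Rightarrow> ('y \<Rightarrow>\<^sub>L real) \<Rightarrow> real) \<Rightarrow> bool" where
  "bounded_linear_into_CK X K T \<longleftrightarrow>
     (\<forall>x\<in>X. T x \<in> CK K) \<and>
     (\<forall>x\<in>X. \<forall>y\<in>X. \<forall>k\<in>K. T (x + y) k = T x k + T y k) \<and>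
     (\<forall>c. \<forall>x\<in>X. \<forall>k\<in>K. T (c *\<^sub>R x) k = c * T x k) \<and>
     (\<exists>M. \<forall>x\<in>X. CK_norm K (T x) \<le> M * norm x)"

text \<open>Rank one: the range (as a subspace of C(K)) is one-dimensional, i.e. it is nonzero
  and contained in the span of a single element g of C(K).\<close>
definition rank_one_into_CK ::
  "'y::real_normed_vector set \<Rightarrow> ('y \<Rightarrow>\<^sub>L real) set \<Rightarrow> ('y \<Rightarrow> ('y \<Rightarrow>\<^sub>L real) \<Rightarrow> real) \<Rightarrow> bool" where
  "rank_one_into_CK X K T \<longleftrightarrow>
     (\<exists>x\<in>X. \<exists>k\<in>K. T x k \<noteq> 0) \<and>
     (\<exists>g\<in>CK K. \<forall>x\<in>X. \<exists>c::real. \<forall>k\<in>K. T x k = c * g k)"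

definition op_norm_into_CK ::
  "'y::real_normed_vector set \<Rightarrow> ('y \<Rightarrow>\<^sub>L real) set \<Rightarrow> ('y \<Rightarrow> ('y \<Rightarrow>\<^sub>L real) \<Rightarrow> real) \<Rightarrow> real" where
  "op_norm_into_CK X K T = (SUP x\<in>X \<inter> cball 0 1. CK_norm K (T x))"

definition daugavet_pair_CK :: "'y::real_normed_vector set \<Rightarrow> ('y \<Rightarrow>\<^sub>L real) set \<Rightarrow> bool" where
  "daugavet_pair_CK X K \<longleftrightarrow>
     (\<forall>T. bounded_linear_into_CK X K T \<and> rank_one_into_CK X K T \<longrightarrow>
        op_norm_into_CK X K (\<lambda>x k. blinfun_apply k x + T x k) = 1 + op_norm_into_CK X K T)"

end

theory Submission
  imports Defs
begin

text \<open>Write a rank-one operator \<open>T : X \<rightarrow> C(K)\<close> as \<open>T x = \<phi>(x) g\<close>, where \<open>g\<close> attains its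
  norm at \<open>k0\<close> with \<open>g(k0) > 0\<close>. The inequality \<open>norm (J + T) \<le> 1 + norm T\<close> is trivial; for
  the converse one needs \<open>x\<close> in the unit ball of \<open>X\<close> with \<open>\<phi>(x)\<close> close to \<open>norm \<phi>\<close>, and
  some \<open>k \<in> K\<close> close to \<open>k0\<close> (so that \<open>g(k)\<close> is close to \<open>g(k0)\<close>) with \<open>k(x)\<close> close to 1.

  Applied to the rank-one operators \<open>\<phi> \<otimes> u\<close>, the Daugavet property of \<open>(X, Y)\<close> shrinks
  every slice of the unit ball of \<open>X\<close> to a subslice on which \<open>norm (x + y)\<close> is close to
  \<open>1 + norm y\<close> for finitely many prescribed \<open>y \<in> Y\<close>. By Choquet's lemma a weak-star
  neighbourhood of an extreme point \<open>e\<close> of the dual ball contains a slice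
  \<open>{k. c < k(y)}\<close> of the ball containing \<open>e\<close>. An extreme functional norming \<open>x + y\<close>, for
  \<open>x\<close> in such a subslice, then lies in that slice and nearly norms \<open>x\<close>. This settles the case
  of the closure of the extreme points; for the whole dual ball, \<open>k0\<close> is approximated by
  convex combinations of extreme points (Krein-Milman) and the norming functionals are
  averaged with the same weights.\<close>

section \<open>Hahn-Banach\<close>

lemma subspace_Union_chain:
  assumes "\<C> \<noteq> {}" "subset.chain \<A> \<C>" "\<And>S. S \<in> \<C> \<Longrightarrow> subspace S"
  shows "subspace (\<Union>\<C>)"
  unfolding subspace_def
proof (intro conjI ballI allI)
  show "0 \<in> \<Union>\<C>" using assms(1,3) subspace_0 by blast
next
  fix x y assume "x \<in> \<Union>\<C>" "y \<in> \<Union>\<C>"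
  then obtain S where "S \<in> \<C>" "{x, y} \<subseteq> S"
    using finite_subset_Union_chain[of "{x, y}" \<C> \<A>] assms(1,2) by blast
  then show "x + y \<in> \<Union>\<C>" using assms(3) subspace_add by blast
next
  fix c x assume "x \<in> \<Union>\<C>"
  then show "c *\<^sub>R x \<in> \<Union>\<C>" using assms(3) subspace_scale by blast
qed

text \<open>Graphs of linear functionals on subspaces of \<open>Y\<close> that are dominated by the norm and
  take the value \<open>norm z\<close> at \<open>z\<close>; Hahn-Banach is Zorn's lemma applied to them.\<close>

definition norming_graph :: "'y::real_normed_vector \<Rightarrow> ('y \<times> real) set \<Rightarrow> bool" where
  "norming_graph z G \<longleftrightarrow> subspace G \<and> (\<forall>b. (0, b) \<in> G \<longrightarrow> b = 0) \<and> (z, norm z) \<in> G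
     \<and> (\<forall>a b. (a, b) \<in> G \<longrightarrow> b \<le> norm a)"

lemma norming_graph_unique:
  assumes "norming_graph z G" "(a, b) \<in> G" "(a, c) \<in> G"
  shows "b = c"
proof -
  have "(a, b) - (a, c) \<in> G" using assms unfolding norming_graph_def by (metis subspace_diff)
  then show ?thesis using assms(1) unfolding norming_graph_def by force
qed

lemma norm_dominated_extension_le:
  fixes M :: "('y::real_normed_vector \<times> real) set"
  assumes M: "subspace M" and ab: "(a, b) \<in> M" and dom: "b \<le> norm a"
    and below: "\<And>a b. (a, b) \<in> M \<Longrightarrow> b - norm (a - v) \<le> c"
    and above: "\<And>a b. (a, b) \<in> M \<Longrightarrow> c \<le> norm (a + v) - b"
  shows "b + t * c \<le> norm (a + t *\<^sub>R v)"
proof -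
  have scaled: "((1 / s) *\<^sub>R a, b / s) \<in> M" for s
    using subspace_scale[OF M ab, of "1 / s"] by simp
  consider "t = 0" | "t > 0" | "t < 0" by linarith
  then show ?thesis
  proof cases
    case 1
    then show ?thesis using dom by simp
  next
    case 2
    have "c \<le> norm ((1 / t) *\<^sub>R a + v) - b / t" using above[OF scaled] .
    also have "(1 / t) *\<^sub>R a + v = (1 / t) *\<^sub>R (a + t *\<^sub>R v)" using 2 by (simp add: algebra_simps)
    finally have "c \<le> (norm (a + t *\<^sub>R v) - b) / t" using 2 by (simp add: diff_divide_distrib)
    then show ?thesis using 2 by (simp add: le_divide_eq algebra_simps)
  next
    case 3
    have "b / (- t) - norm ((1 / (- t)) *\<^sub>R a - v) \<le> c" using below[OF scaled] .
    also have "(1 / (- t)) *\<^sub>R a - v = (1 / (- t)) *\<^sub>R (a + t *\<^sub>R v)" using 3 by (simp add: algebra_simps)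
    finally have "(b - norm (a + t *\<^sub>R v)) / (- t) \<le> c" using 3 by (simp add: diff_divide_distrib)
    then have "b - norm (a + t *\<^sub>R v) \<le> c * (- t)" by (metis 3 neg_0_less_iff_less pos_divide_le_eq)
    then show ?thesis by (simp add: algebra_simps)
  qed
qed

lemma norm_dominated_extension_constant:
  fixes M :: "('y::real_normed_vector \<times> real) set"
  assumes M: "subspace M" and bnd: "\<And>a b. (a, b) \<in> M \<Longrightarrow> b \<le> norm a"
  obtains c where "\<And>a b. (a, b) \<in> M \<Longrightarrow> b - norm (a - v) \<le> c"
    "\<And>a b. (a, b) \<in> M \<Longrightarrow> c \<le> norm (a + v) - b"
proof -
  have "(0, 0) \<in> M" using subspace_0[OF M] by (simp add: zero_prod_def)
  have key: "b1 - norm (a1 - v) \<le> norm (a2 + v) - b2" if "(a1, b1) \<in> M" "(a2, b2) \<in> M"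
    for a1 b1 a2 b2
  proof -
    have "b1 + b2 \<le> norm (a1 + a2)" using bnd subspace_add[OF M that] by simp
    also have "\<dots> \<le> norm (a1 - v) + norm (a2 + v)"
      using norm_triangle_ineq[of "a1 - v" "a2 + v"] by simp
    finally show ?thesis by simp
  qed
  define A where "A = (\<lambda>p. snd p - norm (fst p - v)) ` M"
  have "bdd_above A"
    unfolding A_def bdd_above_def using key[OF _ \<open>(0, 0) \<in> M\<close>] by (auto intro!: exI[of _ "norm v"])
  then have "b - norm (a - v) \<le> Sup A" if "(a, b) \<in> M" for a b
    using that by (intro cSup_upper) (force simp: A_def)
  moreover have "Sup A \<le> norm (a + v) - b" if "(a, b) \<in> M" for a b
    using \<open>(0, 0) \<in> M\<close> key that by (intro cSup_least) (auto simp: A_def)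
  ultimately show thesis by (rule that)
qed

lemma norming_graph_extend:
  fixes z :: "'y::real_normed_vector"
  assumes good: "norming_graph z M" and v: "v \<notin> fst ` M"
  shows "\<exists>M'. norming_graph z M' \<and> M \<subset> M'"
proof -
  have M: "subspace M" and bnd: "\<And>a b. (a, b) \<in> M \<Longrightarrow> b \<le> norm a"
    using good unfolding norming_graph_def by auto
  obtain c where below: "\<And>a b. (a, b) \<in> M \<Longrightarrow> b - norm (a - v) \<le> c"
    and above: "\<And>a b. (a, b) \<in> M \<Longrightarrow> c \<le> norm (a + v) - b"
    using norm_dominated_extension_constant[OF M bnd] by metis
  define M' where "M' = {p + q | p q. p \<in> M \<and> q \<in> span {(v, c)}}"
  have M'_iff: "p' \<in> M' \<longleftrightarrow> (\<exists>a b t. (a, b) \<in> M \<and> p' = (a + t *\<^sub>R v, b + t * c))" for p'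
    unfolding M'_def span_singleton by force
  have "norming_graph z M'"
    unfolding norming_graph_def
  proof (intro conjI allI impI)
    show "subspace M'" unfolding M'_def by (rule subspace_sums[OF M subspace_span])
    have "(z, norm z) = (z + 0 *\<^sub>R v, norm z + 0 * c)" by simp
    then show "(z, norm z) \<in> M'" using good unfolding M'_iff norming_graph_def by blast
  next
    fix a' b' assume "(a', b') \<in> M'"
    then obtain a b t where "(a, b) \<in> M" "a' = a + t *\<^sub>R v" "b' = b + t * c"
      using M'_iff by auto
    then show "b' \<le> norm a'" using norm_dominated_extension_le[OF M _ bnd below above] by simp
  next
    fix b' assume "(0, b') \<in> M'"
    then obtain a b t where ab: "(a, b) \<in> M" "0 = a + t *\<^sub>R v" "b' = b + t * c"
      using M'_iff by auto
    have "t = 0"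
    proof (rule ccontr)
      assume "t \<noteq> 0"
      moreover have "a = - (t *\<^sub>R v)" using ab(2) by (simp add: eq_neg_iff_add_eq_0)
      ultimately have "v = fst ((- 1 / t) *\<^sub>R (a, b))" by simp
      moreover have "(- 1 / t) *\<^sub>R (a, b) \<in> M" using subspace_scale[OF M ab(1)] .
      ultimately show False using v by blast
    qed
    then show "b' = 0" using ab good unfolding norming_graph_def by simp
  qed
  moreover have "M \<subseteq> M'"
  proof
    fix p assume "p \<in> M"
    moreover have "p = (fst p + 0 *\<^sub>R v, snd p + 0 * c)" by simp
    ultimately show "p \<in> M'" unfolding M'_iff by (metis prod.collapse)
  qed
  moreover have "(v, c) \<in> M'"
  proof -
    have "(0, 0) \<in> M" using subspace_0[OF M] by (simp add: zero_prod_def)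
    moreover have "(v, c) = (0 + 1 *\<^sub>R v, 0 + 1 * c)" by simp
    ultimately show ?thesis unfolding M'_iff by blast
  qed
  moreover have "(v, c) \<notin> M" using v by force
  ultimately show ?thesis by blast
qed

lemma exists_total_norming_graph:
  fixes z :: "'y::real_normed_vector"
  shows "\<exists>M. norming_graph z M \<and> (\<forall>a. \<exists>b. (a, b) \<in> M)"
proof -
  define \<A> where "\<A> = {G. norming_graph z G}"
  have "norming_graph z (span {(z, norm z)})"
    unfolding norming_graph_def
  proof (intro conjI allI impI)
    show "subspace (span {(z, norm z)})" by (rule subspace_span)
    show "(z, norm z) \<in> span {(z, norm z)}" by (rule span_base) simp
  qed (auto simp: span_singleton mult_right_mono)
  then have "\<A> \<noteq> {}" unfolding \<A>_def by blast
  moreover have "\<Union>\<C> \<in> \<A>" if ne: "\<C> \<noteq> {}" and ch: "subset.chain \<A> \<C>" for \<C>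
  proof -
    have good: "\<And>G. G \<in> \<C> \<Longrightarrow> norming_graph z G" using ch unfolding \<A>_def subset_chain_def by blast
    then have "subspace (\<Union>\<C>)" using subspace_Union_chain[OF ne ch] unfolding norming_graph_def by blast
    moreover have "(z, norm z) \<in> \<Union>\<C>" using ne good unfolding norming_graph_def by blast
    moreover have "\<forall>b. (0, b) \<in> \<Union>\<C> \<longrightarrow> b = 0" "\<forall>a b. (a, b) \<in> \<Union>\<C> \<longrightarrow> b \<le> norm a"
      using good unfolding norming_graph_def by blast+
    ultimately show ?thesis unfolding \<A>_def norming_graph_def by blast
  qed
  ultimately have "\<exists>M\<in>\<A>. \<forall>G\<in>\<A>. M \<subseteq> G \<longrightarrow> G = M" by (rule subset_Zorn_nonempty)
  then obtain M where good: "norming_graph z M" and max: "\<And>G. norming_graph z G \<Longrightarrow> M \<subseteq> G \<Longrightarrow> G = M"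
    unfolding \<A>_def by blast
  have "a \<in> fst ` M" for a
  proof (rule ccontr)
    assume "a \<notin> fst ` M"
    then obtain M' where "norming_graph z M'" "M \<subset> M'" using norming_graph_extend[OF good] by blast
    with max show False by blast
  qed
  then have "\<exists>b. (a, b) \<in> M" for a by force
  then show ?thesis using good by blast
qed

theorem exists_norming_functional:
  fixes z :: "'y::real_normed_vector"
  shows "\<exists>k::'y \<Rightarrow>\<^sub>L real. norm k \<le> 1 \<and> blinfun_apply k z = norm z"
proof -
  obtain M where good: "norming_graph z M" and total: "\<And>a. \<exists>b. (a, b) \<in> M"
    using exists_total_norming_graph by blast
  have M: "subspace M" using good unfolding norming_graph_def by simp
  obtain k where kM: "\<And>a. (a, k a) \<in> M" using total by metis
  have k_eq: "k a = b" if "(a, b) \<in> M" for a b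
    using norming_graph_unique[OF good kM that] .
  have add: "k (a + a') = k a + k a'" for a a'
    using k_eq subspace_add[OF M kM kM] by simp
  have scale: "k (r *\<^sub>R a) = r * k a" for r a
    using k_eq subspace_scale[OF M kM, of r] by simp
  have le: "k a \<le> norm a" for a using kM good unfolding norming_graph_def by blast
  have abs_le: "\<bar>k a\<bar> \<le> norm a" for a
    using le[of a] le[of "- a"] scale[of "- 1" a] by simp
  have bl: "bounded_linear k"
    by (rule bounded_linear_intro[of _ 1]) (auto simp: add scale abs_le)
  show ?thesis
  proof (intro exI conjI)
    show "norm (Blinfun k) \<le> 1"
      by (rule norm_blinfun_bound) (auto simp: bounded_linear_Blinfun_apply[OF bl] abs_le)
    show "blinfun_apply (Blinfun k) z = norm z"
      using bl k_eq good unfolding norming_graph_def by (simp add: bounded_linear_Blinfun_apply)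
  qed
qed

section \<open>The weak-star topology and Banach-Alaoglu\<close>

lemma weak_star_topology_eq_strong_operator_topology:
  "weak_star_topology = strong_operator_topology"
  unfolding weak_star_topology_def strong_operator_topology_def euclidean_product_topology ..

lemma topspace_weak_star_topology [simp]: "topspace weak_star_topology = UNIV"
  by (simp add: weak_star_topology_eq_strong_operator_topology strong_operator_topology_topspace)

lemma continuous_map_weak_star_evaluation:
  "continuous_map weak_star_topology euclideanreal (\<lambda>k. blinfun_apply k y)"
  unfolding weak_star_topology_eq_strong_operator_topology
  by (rule strong_operator_topology_continuous_evaluation)

lemma continuous_map_into_weak_star_iff:
  "continuous_map T weak_star_topology f \<longleftrightarrow>
     (\<forall>y. continuous_map T euclideanreal (\<lambda>x. blinfun_apply (f x) y))"
  by (simp add: weak_star_topology_eq_strong_operator_topology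
      continuous_on_strong_operator_topo_iff_coordinatewise)

lemma linear_blinfun_evaluation: "linear (\<lambda>k. blinfun_apply k y)"
  by (rule bounded_linear.linear[OF blinfun.bounded_linear_left])

lemma Hausdorff_space_weak_star_topology: "Hausdorff_space weak_star_topology"
proof (rule Hausdorff_space_injective_preimage)
  show "Hausdorff_space (product_topology (\<lambda>_. euclideanreal) UNIV)"
    by (simp add: Hausdorff_space_product_topology Hausdorff_space_euclidean)
  show "continuous_map weak_star_topology (product_topology (\<lambda>_. euclideanreal) UNIV) blinfun_apply"
    unfolding continuous_map_componentwise_UNIV using continuous_map_weak_star_evaluation by blast
  show "inj_on blinfun_apply (topspace weak_star_topology)"
    by (simp add: inj_on_def blinfun_eqI)
qed

definition weak_star_box :: "('y::real_normed_vector \<Rightarrow>\<^sub>L real) \<Rightarrow> 'y set \<Rightarrow> real \<Rightarrow> ('y \<Rightarrow>\<^sub>L real) set" where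
  "weak_star_box f W d = {k. \<forall>w\<in>W. \<bar>blinfun_apply k w - blinfun_apply f w\<bar> < d}"

lemma openin_weak_star_box:
  assumes "finite W"
  shows "openin weak_star_topology (weak_star_box f W d)"
proof -
  have "openin strong_operator_topology {k. \<forall>w\<in>W. blinfun_apply k (id w) \<in> ball (blinfun_apply f w) d}"
    by (rule strong_operator_topology_basis) (use assms in auto)
  then show ?thesis
    unfolding weak_star_box_def weak_star_topology_eq_strong_operator_topology
    by (simp add: dist_real_def abs_minus_commute)
qed

lemma weak_star_box_subset_openin:
  assumes "openin weak_star_topology U" "f \<in> U"
  obtains W d where "finite W" "d > 0" "weak_star_box f W d \<subseteq> U"
proof -
  obtain V where V: "openin (product_topology (\<lambda>_. euclideanreal) UNIV) V" and U: "U = blinfun_apply -` V"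
    using assms(1) unfolding weak_star_topology_def openin_pullback_topology by auto
  then obtain B where fB: "blinfun_apply f \<in> Pi\<^sub>E UNIV B" and opB: "\<And>w. open (B w)"
    and fin: "finite {w. B w \<noteq> UNIV}" and BV: "Pi\<^sub>E UNIV B \<subseteq> V"
    using product_topology_open_contains_basis[OF V, of "blinfun_apply f"] assms(2) by auto
  define W where "W = {w. B w \<noteq> UNIV}"
  have "\<forall>w\<in>W. \<exists>e>0. ball (blinfun_apply f w) e \<subseteq> B w"
    using opB fB by (auto simp: PiE_iff open_contains_ball_eq)
  then obtain e where e: "\<And>w. w \<in> W \<Longrightarrow> e w > 0 \<and> ball (blinfun_apply f w) (e w) \<subseteq> B w"
    by metis
  define d where "d = Min (insert 1 (e ` W))"
  have d: "d > 0" "\<And>w. w \<in> W \<Longrightarrow> d \<le> e w"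
    using e fin unfolding d_def W_def by auto
  have "weak_star_box f W d \<subseteq> U"
  proof
    fix k assume k: "k \<in> weak_star_box f W d"
    have "blinfun_apply k w \<in> B w" for w
    proof (cases "w \<in> W")
      case True
      then have "blinfun_apply k w \<in> ball (blinfun_apply f w) (e w)"
        using k d(2)[OF True] by (auto simp: weak_star_box_def dist_real_def abs_minus_commute)
      then show ?thesis using e[OF True] by blast
    qed (auto simp: W_def)
    then show "k \<in> U" using BV U by (auto simp: PiE_iff)
  qed
  then show thesis using that fin d(1) unfolding W_def by blast
qed

lemma compactin_pullback_topology:
  assumes "compactin T (f ` S)" "S \<subseteq> A"
  shows "compactin (pullback_topology A f T) S"
  unfolding compactin_def
proof (intro conjI allI impI)
  show "S \<subseteq> topspace (pullback_topology A f T)"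
    using assms compactin_subset_topspace unfolding topspace_pullback_topology by fastforce
next
  fix \<U> assume H: "(\<forall>B\<in>\<U>. openin (pullback_topology A f T) B) \<and> S \<subseteq> \<Union>\<U>"
  then obtain V where V: "\<And>B. B \<in> \<U> \<Longrightarrow> openin T (V B) \<and> B = f -` (V B) \<inter> A"
    unfolding openin_pullback_topology by metis
  have "f ` S \<subseteq> \<Union>(V ` \<U>)" using H V by fastforce
  then obtain \<F> where "finite \<F>" "\<F> \<subseteq> V ` \<U>" "f ` S \<subseteq> \<Union>\<F>"
    using assms(1) V unfolding compactin_def by (metis imageE)
  then obtain \<G> where G: "\<G> \<subseteq> \<U>" "finite \<G>" "f ` S \<subseteq> \<Union>(V ` \<G>)"
    by (metis finite_subset_image)
  have "S \<subseteq> \<Union>\<G>" using G(1,3) V assms(2) by blast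
  then show "\<exists>\<F>. finite \<F> \<and> \<F> \<subseteq> \<U> \<and> S \<subseteq> \<Union>\<F>" using G by blast
qed

lemma dual_ball_iff: "k \<in> dual_ball \<longleftrightarrow> (\<forall>y. \<bar>blinfun_apply k y\<bar> \<le> norm y)"
proof
  assume "k \<in> dual_ball"
  then have "norm k \<le> 1" unfolding dual_ball_def by simp
  show "\<forall>y. \<bar>blinfun_apply k y\<bar> \<le> norm y"
  proof
    fix y
    have "\<bar>blinfun_apply k y\<bar> \<le> norm k * norm y" using norm_blinfun[of k y] by simp
    also have "\<dots> \<le> norm y" using \<open>norm k \<le> 1\<close> by (simp add: mult_left_le_one_le)
    finally show "\<bar>blinfun_apply k y\<bar> \<le> norm y" .
  qed
next
  assume "\<forall>y. \<bar>blinfun_apply k y\<bar> \<le> norm y"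
  then have "norm k \<le> 1" by (intro norm_blinfun_bound) auto
  then show "k \<in> dual_ball" unfolding dual_ball_def by simp
qed

lemma dual_ball_le_norm: "k \<in> dual_ball \<Longrightarrow> blinfun_apply k y \<le> norm y"
  using dual_ball_iff abs_le_D1 by blast

lemma convex_dual_ball: "convex dual_ball"
  unfolding dual_ball_def by (rule convex_cball)

theorem Banach_Alaoglu: "compactin weak_star_topology (dual_ball :: ('y::real_normed_vector \<Rightarrow>\<^sub>L real) set)"
proof -
  define P :: "('y \<Rightarrow> real) set" where "P = Pi\<^sub>E UNIV (\<lambda>y. {- norm y..norm y})"
  have "compact P"
    using compactin_PiE[of "\<lambda>_. euclideanreal" UNIV "\<lambda>y. {- norm y..norm y}"]
    unfolding P_def euclidean_product_topology by simp
  moreover have "closed {f :: 'y \<Rightarrow> real. linear f}"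
    unfolding linear_iff
    by (intro closed_Collect_conj closed_Collect_all closed_Collect_eq continuous_intros) auto
  ultimately have "compact (P \<inter> {f. linear f})" by (rule compact_Int_closed)
  moreover have "blinfun_apply ` dual_ball = P \<inter> {f. linear f}"
  proof (intro set_eqI iffI)
    fix f assume "f \<in> blinfun_apply ` (dual_ball :: ('y \<Rightarrow>\<^sub>L real) set)"
    then obtain k where "k \<in> dual_ball" "f = blinfun_apply k" by blast
    then show "f \<in> P \<inter> {f. linear f}"
      unfolding P_def using dual_ball_iff[of k] bounded_linear.linear[OF blinfun.bounded_linear_right]
      by (force simp: abs_le_iff)
  next
    fix f assume f: "f \<in> P \<inter> {f. linear f}"
    have bound: "\<bar>f y\<bar> \<le> norm y" for y
    proof -
      have "f y \<in> {- norm y..norm y}" using f unfolding P_def by (blast intro: PiE_mem)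
      then show ?thesis by (simp add: abs_le_iff)
    qed
    have bl: "bounded_linear f"
      using f bound by (intro bounded_linear_intro[of _ 1]) (auto simp: linear_add linear_scale)
    then have "Blinfun f \<in> dual_ball"
      using bound unfolding dual_ball_iff by (simp add: bounded_linear_Blinfun_apply)
    then show "f \<in> blinfun_apply ` dual_ball"
      using bounded_linear_Blinfun_apply[OF bl] by force
  qed
  ultimately show ?thesis
    unfolding weak_star_topology_def
    by (intro compactin_pullback_topology) (simp_all add: euclidean_product_topology)
qed

lemma closedin_dual_ball: "closedin weak_star_topology dual_ball"
  by (rule compactin_imp_closedin[OF Hausdorff_space_weak_star_topology Banach_Alaoglu])

lemma ext_closure_dual_ball_subset: "ext_closure_dual_ball \<subseteq> dual_ball"
  unfolding ext_closure_dual_ball_def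
  by (rule closure_of_minimal[OF _ closedin_dual_ball]) (auto simp: extreme_point_of_def)

lemma compactin_ext_closure_dual_ball: "compactin weak_star_topology ext_closure_dual_ball"
  by (rule closed_compactin[OF Banach_Alaoglu ext_closure_dual_ball_subset])
     (simp add: ext_closure_dual_ball_def closedin_closure_of)

section \<open>Extreme points of weak-star compact convex sets\<close>

lemma face_of_maximizers:
  fixes f :: "'a::real_vector \<Rightarrow> real"
  assumes "convex S" "linear f"
  shows "{x\<in>S. \<forall>y\<in>S. f y \<le> f x} face_of S"
proof (cases "{x\<in>S. \<forall>y\<in>S. f y \<le> f x} = {}")
  case False
  then obtain x0 where x0: "x0 \<in> S" "\<forall>y\<in>S. f y \<le> f x0" by blast
  have eq: "{x\<in>S. \<forall>y\<in>S. f y \<le> f x} = S \<inter> f -` {f x0..}"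
    using x0 by force
  show ?thesis
    unfolding face_of_def
  proof (intro conjI)
    show "convex {x\<in>S. \<forall>y\<in>S. f y \<le> f x}"
      unfolding eq by (intro convex_Int assms convex_linear_vimage convex_real_interval)
    show "\<forall>a\<in>S. \<forall>b\<in>S. \<forall>x\<in>{x\<in>S. \<forall>y\<in>S. f y \<le> f x}. x \<in> open_segment a b \<longrightarrow>
        a \<in> {x\<in>S. \<forall>y\<in>S. f y \<le> f x} \<and> b \<in> {x\<in>S. \<forall>y\<in>S. f y \<le> f x}"
    proof (intro ballI impI)
      fix a b x assume ab: "a \<in> S" "b \<in> S" and x: "x \<in> {x\<in>S. \<forall>y\<in>S. f y \<le> f x}"
        and "x \<in> open_segment a b"
      then obtain u where u: "0 < u" "u < 1" "x = (1 - u) *\<^sub>R a + u *\<^sub>R b"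
        by (auto simp: in_segment)
      have "f x = (1 - u) * f a + u * f b"
        using u(3) assms(2) by (simp add: linear_add linear_scale)
      then have "(1 - u) * (f x - f a) + u * (f x - f b) = 0" by (simp add: algebra_simps)
      moreover have "0 \<le> (1 - u) * (f x - f a)" "0 \<le> u * (f x - f b)" using x ab u by auto
      ultimately have "(1 - u) * (f x - f a) = 0" "u * (f x - f b) = 0" by linarith+
      then have "f a = f x \<and> f b = f x" using u by simp
      then show "a \<in> {x\<in>S. \<forall>y\<in>S. f y \<le> f x} \<and> b \<in> {x\<in>S. \<forall>y\<in>S. f y \<le> f x}"
        using x ab by auto
    qed
  qed auto
next
  case True
  then show ?thesis by (metis empty_face_of)
qed

lemma closedin_maximizers:
  assumes "closedin X S" "continuous_map X euclideanreal f"
  shows "closedin X {x\<in>S. \<forall>y\<in>S. f y \<le> f x}"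
proof (cases "S = {}")
  case False
  have "{x\<in>S. \<forall>y\<in>S. f y \<le> f x} = S \<inter> (\<Inter>y\<in>S. {x \<in> topspace X. f x \<in> {f y..}})"
    using closedin_subset[OF assms(1)] by auto
  moreover have "closedin X {x \<in> topspace X. f x \<in> {f y..}}" for y
    by (rule closedin_continuous_map_preimage[OF assms(2)]) simp
  ultimately show ?thesis
    using False by (auto intro!: closedin_Int closedin_Inter assms(1))
qed simp

lemma compactin_attains_sup:
  assumes "compactin X S" "S \<noteq> {}" "continuous_map X euclideanreal f"
  shows "\<exists>x\<in>S. \<forall>y\<in>S. f y \<le> f x"
proof -
  have "compact (f ` S)" using image_compactin[OF assms(1,3)] by simp
  then show ?thesis using compact_attains_sup[of "f ` S"] assms(2) by auto
qed

lemma subset_Zorn_minimal_nonempty: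
  assumes "\<A> \<noteq> {}" and ch: "\<And>\<C>. \<lbrakk>\<C> \<noteq> {}; subset.chain \<A> \<C>\<rbrakk> \<Longrightarrow> \<Inter>\<C> \<in> \<A>"
  shows "\<exists>M\<in>\<A>. \<forall>X\<in>\<A>. X \<subseteq> M \<longrightarrow> X = M"
proof -
  have "\<exists>M\<in>uminus ` \<A>. \<forall>X\<in>uminus ` \<A>. M \<subseteq> X \<longrightarrow> X = M"
  proof (rule subset_Zorn_nonempty)
    show "uminus ` \<A> \<noteq> {}" using assms(1) by simp
  next
    fix \<C> assume "\<C> \<noteq> {}" "subset.chain (uminus ` \<A>) \<C>"
    then have "uminus ` \<C> \<noteq> {}" "subset.chain \<A> (uminus ` \<C>)"
      unfolding subset_chain_def by (auto simp: image_subset_iff)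
    then have "\<Inter>(uminus ` \<C>) \<in> \<A>" by (rule ch)
    moreover have "\<Union>\<C> = - \<Inter>(uminus ` \<C>)" by auto
    ultimately show "\<Union>\<C> \<in> uminus ` \<A>" by (metis image_eqI)
  qed
  then show ?thesis by (metis (no_types, lifting) Compl_subset_Compl_iff double_complement imageE image_eqI)
qed

lemma compactin_Inter_chain:
  assumes X: "Hausdorff_space X" and ne: "\<C> \<noteq> {}" and ch: "subset.chain \<A> \<C>"
    and C: "\<And>G. G \<in> \<C> \<Longrightarrow> compactin X G \<and> G \<noteq> {}"
  shows "compactin X (\<Inter>\<C>) \<and> \<Inter>\<C> \<noteq> {}"
proof
  obtain G0 where G0: "G0 \<in> \<C>" using ne by blast
  have closed: "\<forall>G\<in>\<C>. closedin X G" using C compactin_imp_closedin[OF X] by blast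
  then show "compactin X (\<Inter>\<C>)" using C G0 by (intro closed_compactin_Inter[of _ G0]) auto
  have "\<forall>\<F>. finite \<F> \<and> \<F> \<subseteq> \<C> \<longrightarrow> G0 \<inter> \<Inter>\<F> \<noteq> {}"
  proof (intro allI impI)
    fix \<F> assume \<F>: "finite \<F> \<and> \<F> \<subseteq> \<C>"
    have "subset.chain \<A> (insert G0 \<F>)" using ch G0 \<F> unfolding subset_chain_def by blast
    then have "\<Inter>(insert G0 \<F>) \<in> insert G0 \<F>" using \<F> by (intro Inter_in_chain) auto
    then show "G0 \<inter> \<Inter>\<F> \<noteq> {}" using C G0 \<F> by auto
  qed
  then have "G0 \<inter> \<Inter>\<C> \<noteq> {}"
    using compactin_fip[THEN iffD1, THEN conjunct2, rule_format] C[OF G0] closed by blast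
  then show "\<Inter>\<C> \<noteq> {}" by blast
qed

theorem weak_star_compact_convex_has_extreme_point:
  fixes F :: "('y::real_normed_vector \<Rightarrow>\<^sub>L real) set"
  assumes F: "compactin weak_star_topology F" "convex F" "F \<noteq> {}"
  shows "\<exists>e. e extreme_point_of F"
proof -
  define \<A> where "\<A> = {G. G face_of F \<and> G \<noteq> {} \<and> compactin weak_star_topology G}"
  have "\<exists>G\<in>\<A>. \<forall>H\<in>\<A>. H \<subseteq> G \<longrightarrow> H = G"
  proof (rule subset_Zorn_minimal_nonempty)
    show "\<A> \<noteq> {}" using F face_of_refl unfolding \<A>_def by blast
  next
    fix \<C> assume ne: "\<C> \<noteq> {}" and ch: "subset.chain \<A> \<C>"
    then have "\<C> \<subseteq> \<A>" unfolding subset_chain_def by blast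
    then have "compactin weak_star_topology (\<Inter>\<C>) \<and> \<Inter>\<C> \<noteq> {}"
      using compactin_Inter_chain[OF Hausdorff_space_weak_star_topology ne ch] unfolding \<A>_def by blast
    then show "\<Inter>\<C> \<in> \<A>"
      using \<open>\<C> \<subseteq> \<A>\<close> ne unfolding \<A>_def by (auto intro!: face_of_Inter)
  qed
  then obtain G where G: "G face_of F" "G \<noteq> {}" "compactin weak_star_topology G"
    and minimal: "\<And>H. H face_of F \<Longrightarrow> H \<noteq> {} \<Longrightarrow> compactin weak_star_topology H \<Longrightarrow> H \<subseteq> G \<Longrightarrow> H = G"
    unfolding \<A>_def by blast
  obtain e where "e \<in> G" using G(2) by blast
  have "G = {e}"
  proof (rule ccontr)
    assume "G \<noteq> {e}"
    then obtain e' where "e' \<in> G" "e' \<noteq> e" using \<open>e \<in> G\<close> by blast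
    then obtain w where w: "blinfun_apply e w \<noteq> blinfun_apply e' w" using blinfun_eqI by metis
    define H where "H = {k\<in>G. \<forall>k'\<in>G. blinfun_apply k' w \<le> blinfun_apply k w}"
    have "H face_of F"
      unfolding H_def using face_of_maximizers[OF face_of_imp_convex[OF G(1)] linear_blinfun_evaluation] G(1)
      by (rule face_of_trans)
    moreover have "H \<noteq> {}"
      unfolding H_def using compactin_attains_sup[OF G(3,2) continuous_map_weak_star_evaluation] by blast
    moreover have "compactin weak_star_topology H"
      unfolding H_def
      by (rule closed_compactin[OF G(3)])
         (auto intro: closedin_maximizers compactin_imp_closedin[OF Hausdorff_space_weak_star_topology G(3)]
           continuous_map_weak_star_evaluation)
    ultimately have "H = G" using minimal unfolding H_def by blast
    then have "blinfun_apply e' w \<le> blinfun_apply e w" "blinfun_apply e w \<le> blinfun_apply e' w"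
      using \<open>e \<in> G\<close> \<open>e' \<in> G\<close> unfolding H_def by blast+
    with w show False by simp
  qed
  then have "{e} face_of F" using G(1) by simp
  then show ?thesis by (auto simp: face_of_singleton)
qed

lemma exists_extreme_point_maximizing:
  "\<exists>e. e extreme_point_of (dual_ball :: ('y::real_normed_vector \<Rightarrow>\<^sub>L real) set) \<and>
      (\<forall>k\<in>dual_ball. blinfun_apply k y \<le> blinfun_apply e y)"
proof -
  define F :: "('y \<Rightarrow>\<^sub>L real) set"
    where "F = {k\<in>dual_ball. \<forall>k'\<in>dual_ball. blinfun_apply k' y \<le> blinfun_apply k y}"
  have face: "F face_of dual_ball"
    unfolding F_def by (rule face_of_maximizers[OF convex_dual_ball linear_blinfun_evaluation])
  have "compactin weak_star_topology F"
    unfolding F_def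
    by (intro closed_compactin[OF Banach_Alaoglu] closedin_maximizers closedin_dual_ball
        continuous_map_weak_star_evaluation) auto
  moreover have "dual_ball \<noteq> {}" unfolding dual_ball_def by (metis centre_in_cball empty_iff zero_le_one)
  then have "F \<noteq> {}"
    unfolding F_def using compactin_attains_sup[OF Banach_Alaoglu _ continuous_map_weak_star_evaluation]
    by blast
  ultimately obtain e where "e extreme_point_of F"
    using weak_star_compact_convex_has_extreme_point face_of_imp_convex[OF face] by blast
  then show ?thesis using extreme_point_of_face[OF face] unfolding F_def by blast
qed

lemma exists_extreme_norming_functional:
  "\<exists>e. e extreme_point_of (dual_ball :: ('y::real_normed_vector \<Rightarrow>\<^sub>L real) set) \<and> blinfun_apply e z = norm z"
proof -
  obtain e where e: "e extreme_point_of (dual_ball :: ('y \<Rightarrow>\<^sub>L real) set)"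
    "\<forall>k\<in>dual_ball. blinfun_apply k z \<le> blinfun_apply e z"
    using exists_extreme_point_maximizing by blast
  obtain k :: "'y \<Rightarrow>\<^sub>L real" where "norm k \<le> 1" "blinfun_apply k z = norm z"
    using exists_norming_functional by blast
  then have "norm z \<le> blinfun_apply e z" using e(2) unfolding dual_ball_def by force
  moreover have "blinfun_apply e z \<le> norm z"
    using e(1) dual_ball_le_norm unfolding extreme_point_of_def by blast
  ultimately show ?thesis using e(1) by force
qed

section \<open>Separation, Choquet's lemma and Krein-Milman\<close>

lemma nonneg_if_nonneg_perturbation:
  fixes a b :: real
  assumes "\<And>t. 0 < t \<Longrightarrow> t \<le> 1 \<Longrightarrow> 0 \<le> a + t * b"
  shows "0 \<le> a"
proof (rule field_le_epsilon)
  fix e :: real assume "0 < e"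
  define t where "t = min 1 (e / (\<bar>b\<bar> + 1))"
  have t: "0 < t" "t \<le> 1" using \<open>0 < e\<close> unfolding t_def by auto
  have "t * \<bar>b\<bar> \<le> e / (\<bar>b\<bar> + 1) * (\<bar>b\<bar> + 1)"
    unfolding t_def using \<open>0 < e\<close> by (intro mult_mono) auto
  then have "t * \<bar>b\<bar> \<le> e" by (simp add: add_pos_nonneg)
  moreover have "t * b \<le> t * \<bar>b\<bar>" using t by (intro mult_left_mono) auto
  ultimately show "0 \<le> a + e" using assms[OF t] by linarith
qed

lemma weak_star_compact_finite_separating:
  assumes "compactin weak_star_topology C" "e \<notin> C"
  obtains W where "finite W" "\<And>k. k \<in> C \<Longrightarrow> \<exists>w\<in>W. blinfun_apply k w \<noteq> blinfun_apply e w"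
proof -
  define U where "U w = (\<lambda>k. blinfun_apply k w) -` (- {blinfun_apply e w})" for w
  have "openin weak_star_topology (U w)" for w
    using openin_continuous_map_preimage[OF continuous_map_weak_star_evaluation, of "- {blinfun_apply e w}"]
    unfolding U_def by (simp add: open_Compl vimage_def)
  moreover have "C \<subseteq> \<Union>(range U)"
  proof
    fix k assume "k \<in> C"
    then have "k \<noteq> e" using assms(2) by blast
    then obtain w where "blinfun_apply k w \<noteq> blinfun_apply e w" using blinfun_eqI by blast
    then show "k \<in> \<Union>(range U)" unfolding U_def by blast
  qed
  ultimately obtain \<F> where "finite \<F>" "\<F> \<subseteq> range U" "C \<subseteq> \<Union>\<F>"
    using assms(1) unfolding compactin_def by (metis imageE)
  then obtain W where "finite W" "C \<subseteq> \<Union>(U ` W)"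
    by (metis finite_subset_image subset_UNIV)
  then show thesis using that unfolding U_def by blast
qed

lemma nearest_point_variational_inequality:
  fixes C :: "('y::real_normed_vector \<Rightarrow>\<^sub>L real) set" and W :: "'y set" and e :: "'y \<Rightarrow>\<^sub>L real"
  defines "d \<equiv> \<lambda>k. \<Sum>w\<in>W. (blinfun_apply k w - blinfun_apply e w)\<^sup>2"
  assumes C: "convex C" "p \<in> C" "q \<in> C" and min: "\<And>k. k \<in> C \<Longrightarrow> d p \<le> d k"
  shows "0 \<le> (\<Sum>w\<in>W. (blinfun_apply p w - blinfun_apply e w) * (blinfun_apply q w - blinfun_apply p w))"
proof -
  define a where "a w = blinfun_apply p w - blinfun_apply e w" for w
  define b where "b w = blinfun_apply q w - blinfun_apply p w" for w
  have "0 \<le> 2 * (\<Sum>w\<in>W. a w * b w) + t * (\<Sum>w\<in>W. (b w)\<^sup>2)" if t: "0 < t" "t \<le> 1" for t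
  proof -
    have "(1 - t) *\<^sub>R p + t *\<^sub>R q \<in> C" using convexD_alt[OF C] t by simp
    then have "d p \<le> d ((1 - t) *\<^sub>R p + t *\<^sub>R q)" by (rule min)
    also have "\<dots> = (\<Sum>w\<in>W. (a w + t * b w)\<^sup>2)"
      unfolding d_def a_def b_def
      by (intro sum.cong refl) (simp add: blinfun.add_left blinfun.diff_left blinfun.scaleR_left algebra_simps)
    also have "\<dots> = d p + t * (2 * (\<Sum>w\<in>W. a w * b w) + t * (\<Sum>w\<in>W. (b w)\<^sup>2))"
      unfolding d_def a_def[symmetric]
      by (simp add: power2_sum power_mult_distrib sum.distrib sum_distrib_left distrib_left
          power2_eq_square ac_simps)
    finally show ?thesis using t by (simp add: zero_le_mult_iff)
  qed
  then have "0 \<le> 2 * (\<Sum>w\<in>W. a w * b w)" by (rule nonneg_if_nonneg_perturbation)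
  then show ?thesis unfolding a_def b_def by simp
qed

text \<open>Minimise over \<open>C\<close> the squared distance to \<open>e\<close> in finitely many separating
  coordinates \<open>W\<close>; the first-order condition at the minimiser \<open>p\<close> says that
  \<open>y = \<Sum>w\<in>W. (e w - p w) w\<close> separates \<open>e\<close> from \<open>C\<close>.\<close>

theorem weak_star_separation:
  fixes C :: "('y::real_normed_vector \<Rightarrow>\<^sub>L real) set"
  assumes C: "compactin weak_star_topology C" "convex C" and "e \<notin> C"
  shows "\<exists>y c. c < blinfun_apply e y \<and> (\<forall>k\<in>C. blinfun_apply k y \<le> c)"
proof (cases "C = {}")
  case True
  then show ?thesis by (intro exI[of _ 0] exI[of _ "- 1"]) auto
next
  case False
  obtain W where W: "finite W" "\<And>k. k \<in> C \<Longrightarrow> \<exists>w\<in>W. blinfun_apply k w \<noteq> blinfun_apply e w"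
    using weak_star_compact_finite_separating[OF C(1) \<open>e \<notin> C\<close>] by blast
  define d where "d k = (\<Sum>w\<in>W. (blinfun_apply k w - blinfun_apply e w)\<^sup>2)" for k
  have "continuous_map weak_star_topology euclideanreal (\<lambda>k. - d k)"
    unfolding d_def
    by (intro continuous_map_minus continuous_map_sum continuous_map_real_pow continuous_map_diff
        continuous_map_weak_star_evaluation continuous_map_const[THEN iffD2] W(1)) auto
  from compactin_attains_sup[OF C(1) False this]
  obtain p where p: "p \<in> C" "\<And>k. k \<in> C \<Longrightarrow> d p \<le> d k" by auto
  define y where "y = (\<Sum>w\<in>W. (blinfun_apply e w - blinfun_apply p w) *\<^sub>R w)"
  have apply_y: "blinfun_apply k y = (\<Sum>w\<in>W. (blinfun_apply e w - blinfun_apply p w) * blinfun_apply k w)" for k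
    unfolding y_def by (simp add: blinfun.sum_right blinfun.scaleR_right)
  have "0 < d p"
  proof -
    obtain w where w: "w \<in> W" "blinfun_apply p w \<noteq> blinfun_apply e w" using W(2)[OF p(1)] by blast
    then have "0 < (blinfun_apply p w - blinfun_apply e w)\<^sup>2" by simp
    also have "\<dots> \<le> d p" unfolding d_def by (rule member_le_sum) (use w W(1) in auto)
    finally show ?thesis .
  qed
  moreover have "blinfun_apply e y - blinfun_apply p y = d p"
    unfolding apply_y d_def by (simp add: sum_subtractf[symmetric] power2_eq_square algebra_simps)
  moreover have "blinfun_apply k y \<le> blinfun_apply p y" if "k \<in> C" for k
  proof -
    have "blinfun_apply p y - blinfun_apply k y =
        (\<Sum>w\<in>W. (blinfun_apply p w - blinfun_apply e w) * (blinfun_apply k w - blinfun_apply p w))"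
      unfolding apply_y by (simp add: sum_subtractf[symmetric] algebra_simps)
    also have "0 \<le> \<dots>"
      using nearest_point_variational_inequality[OF C(2) p(1) that p(2)[unfolded d_def]] .
    finally show ?thesis by simp
  qed
  ultimately show ?thesis by (intro exI[of _ y] exI[of _ "blinfun_apply p y"]) auto
qed

lemma convex_hull_Un_eq_image:
  fixes S T :: "'a::real_vector set"
  assumes "convex S" "convex T" "S \<noteq> {}" "T \<noteq> {}"
  shows "convex hull (S \<union> T) = (\<lambda>(t, s, u). (1 - t) *\<^sub>R s + t *\<^sub>R u) ` ({0..1} \<times> S \<times> T)"
proof -
  define A where "A b = (if b then T else S)" for b
  have "S \<union> T = \<Union>(A ` UNIV)" by (auto simp: A_def)
  then have "convex hull (S \<union> T) =
      {\<Sum>b\<in>UNIV. c b *\<^sub>R s b | c s. (\<forall>b\<in>UNIV. 0 \<le> c b) \<and> sum c UNIV = 1 \<and> (\<forall>b\<in>UNIV. s b \<in> A b)}"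
    using convex_hull_finite_union[of UNIV A] assms by (simp add: A_def)
  also have "\<dots> = (\<lambda>(t, s, u). (1 - t) *\<^sub>R s + t *\<^sub>R u) ` ({0..1} \<times> S \<times> T)"
  proof (intro set_eqI iffI)
    fix x assume "x \<in> {\<Sum>b\<in>UNIV. c b *\<^sub>R s b | c s.
        (\<forall>b\<in>UNIV. 0 \<le> c b) \<and> sum c UNIV = 1 \<and> (\<forall>b\<in>UNIV. s b \<in> A b)}"
    then obtain c s where "x = c False *\<^sub>R s False + c True *\<^sub>R s True" "0 \<le> c False" "0 \<le> c True"
      "c False + c True = 1" "s False \<in> S" "s True \<in> T"
      by (auto simp: UNIV_bool A_def)
    then show "x \<in> (\<lambda>(t, s, u). (1 - t) *\<^sub>R s + t *\<^sub>R u) ` ({0..1} \<times> S \<times> T)"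
      by (intro image_eqI[of _ _ "(c True, s False, s True)"]) auto
  next
    fix x assume "x \<in> (\<lambda>(t, s, u). (1 - t) *\<^sub>R s + t *\<^sub>R u) ` ({0..1} \<times> S \<times> T)"
    then obtain t s u where "x = (1 - t) *\<^sub>R s + t *\<^sub>R u" "t \<in> {0..1}" "s \<in> S" "u \<in> T" by auto
    then show "x \<in> {\<Sum>b\<in>UNIV. c b *\<^sub>R s b | c s.
        (\<forall>b\<in>UNIV. 0 \<le> c b) \<and> sum c UNIV = 1 \<and> (\<forall>b\<in>UNIV. s b \<in> A b)}"
      by (intro CollectI exI[of _ "\<lambda>b. if b then t else 1 - t"] exI[of _ "\<lambda>b. if b then u else s"])
         (auto simp: UNIV_bool A_def)
  qed
  finally show ?thesis .
qed

lemma compactin_weak_star_convex_hull_Un: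
  fixes A B :: "('y::real_normed_vector \<Rightarrow>\<^sub>L real) set"
  assumes "compactin weak_star_topology A" "compactin weak_star_topology B"
    and "convex A" "convex B" "A \<noteq> {}" "B \<noteq> {}"
  shows "compactin weak_star_topology (convex hull (A \<union> B))"
proof -
  let ?T = "prod_topology euclideanreal (prod_topology weak_star_topology weak_star_topology)"
  have "compactin ?T ({0..1} \<times> A \<times> B)"
    using assms(1,2) by (simp add: compactin_Times)
  moreover have "continuous_map ?T weak_star_topology (\<lambda>(t, s, u). (1 - t) *\<^sub>R s + t *\<^sub>R u)"
    unfolding continuous_map_into_weak_star_iff
  proof
    fix y
    have "continuous_map ?T euclideanreal
        (\<lambda>p. (1 - fst p) * blinfun_apply (fst (snd p)) y + fst p * blinfun_apply (snd (snd p)) y)"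
      by (intro continuous_map_add continuous_map_real_mult continuous_map_diff continuous_map_fst
          continuous_map_canonical_const continuous_map_compose[OF continuous_map_snd, unfolded o_def]
          continuous_map_compose[OF continuous_map_fst continuous_map_weak_star_evaluation, unfolded o_def]
          continuous_map_compose[OF continuous_map_snd continuous_map_weak_star_evaluation, unfolded o_def])
    then show "continuous_map ?T euclideanreal
        (\<lambda>x. blinfun_apply (case x of (t, s, u) \<Rightarrow> (1 - t) *\<^sub>R s + t *\<^sub>R u) y)"
      by (simp add: case_prod_beta blinfun.add_left blinfun.scaleR_left)
  qed
  ultimately show ?thesis
    unfolding convex_hull_Un_eq_image[OF assms(3-6)] by (rule image_compactin)
qed

lemma compactin_weak_star_convex_hull_Union:
  fixes \<H> :: "('y::real_normed_vector \<Rightarrow>\<^sub>L real) set set"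
  assumes "finite \<H>" "\<And>H. H \<in> \<H> \<Longrightarrow> compactin weak_star_topology H \<and> convex H"
  shows "compactin weak_star_topology (convex hull (\<Union>\<H>))"
  using assms
proof (induction \<H> rule: finite_induct)
  case (insert H \<H>)
  have IH: "compactin weak_star_topology (convex hull (\<Union>\<H>))"
    and H: "compactin weak_star_topology H" "convex H" using insert by auto
  consider "H = {}" | "\<Union>\<H> = {}" | "H \<noteq> {}" "\<Union>\<H> \<noteq> {}" by blast
  then show ?case
  proof cases
    case 1
    then show ?thesis using IH by simp
  next
    case 2
    then have "\<Union>(insert H \<H>) = H" by auto
    then show ?thesis using H by (simp add: hull_same)
  next
    case 3
    have "convex hull (\<Union>(insert H \<H>)) = convex hull (H \<union> convex hull (\<Union>\<H>))"
      unfolding Union_insert by (rule hull_Un_right)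
    then show ?thesis
      using compactin_weak_star_convex_hull_Un[OF H(1) IH H(2) convex_convex_hull] 3 by simp
  qed
qed simp

lemma compactin_convex_dual_ball_slab:
  fixes I :: "real set"
  assumes "closed I" "convex I"
  shows "compactin weak_star_topology (dual_ball \<inter> (\<lambda>k. blinfun_apply k w) -` I)"
    and "convex (dual_ball \<inter> (\<lambda>k::'y::real_normed_vector \<Rightarrow>\<^sub>L real. blinfun_apply k w) -` I)"
proof -
  have "closedin weak_star_topology ((\<lambda>k. blinfun_apply k w) -` I)"
    using closedin_continuous_map_preimage[OF continuous_map_weak_star_evaluation assms(1)[unfolded closed_closedin]]
    by (simp add: vimage_def)
  then show "compactin weak_star_topology (dual_ball \<inter> (\<lambda>k. blinfun_apply k w) -` I)"
    by (intro closed_compactin[OF Banach_Alaoglu] closedin_Int closedin_dual_ball) auto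
  show "convex (dual_ball \<inter> (\<lambda>k::'y \<Rightarrow>\<^sub>L real. blinfun_apply k w) -` I)"
    by (intro convex_Int convex_dual_ball convex_linear_vimage[OF linear_blinfun_evaluation] assms(2))
qed

text \<open>The slabs cut from the ball by a basic neighbourhood of \<open>e\<close> have a
  weak-star compact convex hull, which misses the extreme point \<open>e\<close> and can therefore be
  separated from it.\<close>

theorem extreme_point_slice_subset_openin:
  fixes e :: "'y::real_normed_vector \<Rightarrow>\<^sub>L real"
  assumes ext: "e extreme_point_of dual_ball" and U: "openin weak_star_topology U" "e \<in> U"
  shows "\<exists>y c. c < blinfun_apply e y \<and> (\<forall>k\<in>dual_ball. c < blinfun_apply k y \<longrightarrow> k \<in> U)"
proof -
  obtain W d where W: "finite W" "d > 0" "weak_star_box e W d \<subseteq> U"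
    using weak_star_box_subset_openin[OF U] .
  define \<H> where "\<H> =
    (\<lambda>w. dual_ball \<inter> (\<lambda>k. blinfun_apply k w) -` {blinfun_apply e w + d..}) ` W \<union>
    (\<lambda>w. dual_ball \<inter> (\<lambda>k. blinfun_apply k w) -` {..blinfun_apply e w - d}) ` W"
  define C where "C = convex hull (\<Union>\<H>)"
  have "compactin weak_star_topology C"
    unfolding C_def
  proof (rule compactin_weak_star_convex_hull_Union)
    show "finite \<H>" unfolding \<H>_def using W(1) by simp
    show "compactin weak_star_topology H \<and> convex H" if "H \<in> \<H>" for H
      using that unfolding \<H>_def
      by (auto intro!: compactin_convex_dual_ball_slab simp: convex_real_interval)
  qed
  moreover have "convex C" unfolding C_def by simp
  moreover have "e \<notin> C"
  proof
    assume "e \<in> C"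
    moreover have "C \<subseteq> dual_ball"
      unfolding C_def by (rule hull_minimal) (auto simp: \<H>_def convex_dual_ball)
    ultimately have "e extreme_point_of C" using ext unfolding extreme_point_of_def by blast
    then have "e \<in> \<Union>\<H>" unfolding C_def by (rule extreme_point_of_convex_hull)
    then show False unfolding \<H>_def using W(2) by auto
  qed
  ultimately obtain y c where yc: "c < blinfun_apply e y" "\<And>k. k \<in> C \<Longrightarrow> blinfun_apply k y \<le> c"
    using weak_star_separation by blast
  have "k \<in> U" if k: "k \<in> dual_ball" "c < blinfun_apply k y" for k
  proof -
    have "k \<notin> C" using yc(2)[of k] k(2) by linarith
    moreover have "\<Union>\<H> \<subseteq> C" unfolding C_def by (rule hull_subset)
    ultimately have "k \<notin> \<Union>\<H>" by blast
    then have "k \<in> weak_star_box e W d"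
      using k(1) unfolding \<H>_def weak_star_box_def by (auto simp: abs_less_iff)
    then show ?thesis using W(3) by blast
  qed
  then show ?thesis using yc(1) by blast
qed

lemma convex_weak_star_closure:
  fixes S :: "('y::real_normed_vector \<Rightarrow>\<^sub>L real) set"
  assumes "convex S"
  shows "convex (weak_star_topology closure_of S)"
  unfolding convex_alt
proof (intro ballI allI impI)
  fix x y and u :: real
  assume xy: "x \<in> weak_star_topology closure_of S" "y \<in> weak_star_topology closure_of S"
    and u: "0 \<le> u \<and> u \<le> 1"
  define h where "h p = (1 - u) *\<^sub>R fst p + u *\<^sub>R snd p" for p :: "('y \<Rightarrow>\<^sub>L real) \<times> ('y \<Rightarrow>\<^sub>L real)"
  let ?T = "prod_topology weak_star_topology weak_star_topology"
  have "continuous_map ?T weak_star_topology h"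
    unfolding continuous_map_into_weak_star_iff
  proof
    fix w :: 'y
    have "continuous_map ?T euclideanreal
        (\<lambda>p. (1 - u) * blinfun_apply (fst p) w + u * blinfun_apply (snd p) w)"
      by (intro continuous_map_add continuous_map_real_mult continuous_map_canonical_const
          continuous_map_compose[OF continuous_map_fst continuous_map_weak_star_evaluation, unfolded o_def]
          continuous_map_compose[OF continuous_map_snd continuous_map_weak_star_evaluation, unfolded o_def])
    then show "continuous_map ?T euclideanreal (\<lambda>p. blinfun_apply (h p) w)"
      unfolding h_def by (simp add: blinfun.add_left blinfun.scaleR_left)
  qed
  moreover have "(x, y) \<in> ?T closure_of (S \<times> S)" using xy by (simp add: closure_of_Times)
  ultimately have "h (x, y) \<in> weak_star_topology closure_of (h ` (S \<times> S))"
    using continuous_map_image_closure_subset by blast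
  moreover have "h ` (S \<times> S) \<subseteq> S" using assms u unfolding h_def convex_alt by auto
  ultimately show "(1 - u) *\<^sub>R x + u *\<^sub>R y \<in> weak_star_topology closure_of S"
    unfolding h_def using closure_of_mono by fastforce
qed

theorem Krein_Milman_dual_ball:
  "(dual_ball :: ('y::real_normed_vector \<Rightarrow>\<^sub>L real) set) \<subseteq>
     weak_star_topology closure_of (convex hull {e. e extreme_point_of dual_ball})"
proof
  fix k0 :: "'y \<Rightarrow>\<^sub>L real" assume k0: "k0 \<in> dual_ball"
  define C where "C = weak_star_topology closure_of (convex hull {e::'y \<Rightarrow>\<^sub>L real. e extreme_point_of dual_ball})"
  have "convex hull {e::'y \<Rightarrow>\<^sub>L real. e extreme_point_of dual_ball} \<subseteq> dual_ball"
    by (rule hull_minimal) (auto simp: extreme_point_of_def convex_dual_ball)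
  then have "C \<subseteq> dual_ball" unfolding C_def by (rule closure_of_minimal[OF _ closedin_dual_ball])
  then have "compactin weak_star_topology C"
    unfolding C_def by (rule closed_compactin[OF Banach_Alaoglu _ closedin_closure_of])
  moreover have "convex C" unfolding C_def by (intro convex_weak_star_closure convex_convex_hull)
  moreover have "{e. e extreme_point_of dual_ball} \<subseteq> C"
  proof -
    have "{e. e extreme_point_of dual_ball} \<subseteq> convex hull {e::'y \<Rightarrow>\<^sub>L real. e extreme_point_of dual_ball}"
      by (rule hull_subset)
    also have "\<dots> \<subseteq> C" unfolding C_def by (rule closure_of_subset) simp
    finally show ?thesis .
  qed
  ultimately show "k0 \<in> C"
  proof (rule_tac ccontr)
    assume C: "compactin weak_star_topology C" "convex C" "{e. e extreme_point_of dual_ball} \<subseteq> C"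
      and "k0 \<notin> C"
    then obtain y c where yc: "c < blinfun_apply k0 y" "\<And>k. k \<in> C \<Longrightarrow> blinfun_apply k y \<le> c"
      using weak_star_separation by blast
    obtain e where e: "e extreme_point_of (dual_ball :: ('y \<Rightarrow>\<^sub>L real) set)"
      "\<forall>k\<in>dual_ball. blinfun_apply k y \<le> blinfun_apply e y"
      using exists_extreme_point_maximizing by blast
    have "blinfun_apply k0 y \<le> blinfun_apply e y" using e(2) k0 by blast
    moreover have "blinfun_apply e y \<le> c" using yc(2) e(1) C(3) by blast
    ultimately show False using yc(1) by linarith
  qed
qed

section \<open>Functionals on a subspace and the Daugavet property\<close>

lemma bounded_linear_on_scaleR:
  "bounded_linear_on X f \<Longrightarrow> x \<in> X \<Longrightarrow> f (c *\<^sub>R x) = c *\<^sub>R f x"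
  unfolding bounded_linear_on_def by blast

lemma bounded_linear_on_minus:
  "bounded_linear_on X f \<Longrightarrow> x \<in> X \<Longrightarrow> f (- x) = - f x"
  using bounded_linear_on_scaleR[of X f x "- 1"] by simp

lemma bounded_linear_on_blinfun: "bounded_linear_on X (blinfun_apply k)"
  unfolding bounded_linear_on_def
  by (auto simp: blinfun.add_right blinfun.scaleR_right intro: exI[of _ "norm k"] norm_blinfun[THEN order_trans] simp: mult.commute)

lemma bounded_linear_on_id: "bounded_linear_on X (\<lambda>x. x)"
  unfolding bounded_linear_on_def by (auto intro: exI[of _ 1])

lemma bounded_linear_on_plus:
  assumes "bounded_linear_on X f" "bounded_linear_on X g"
  shows "bounded_linear_on X (\<lambda>x. f x + g x)"
proof -
  obtain M N where "\<And>x. x \<in> X \<Longrightarrow> norm (f x) \<le> M * norm x" "\<And>x. x \<in> X \<Longrightarrow> norm (g x) \<le> N * norm x"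
    using assms unfolding bounded_linear_on_def by metis
  then have "norm (f x + g x) \<le> (M + N) * norm x" if "x \<in> X" for x
    using norm_triangle_ineq[of "f x" "g x"] that by (simp add: distrib_right add_mono order_trans)
  then show ?thesis
    using assms unfolding bounded_linear_on_def
    by (intro conjI ballI allI exI[of _ "M + N"]) (simp_all add: scaleR_add_right)
qed

lemma bounded_linear_on_scaleR_const:
  fixes f :: "'a::real_normed_vector \<Rightarrow> real"
  assumes "bounded_linear_on X f"
  shows "bounded_linear_on X (\<lambda>x. f x *\<^sub>R u)"
proof -
  obtain M where "\<And>x. x \<in> X \<Longrightarrow> norm (f x) \<le> M * norm x"
    using assms unfolding bounded_linear_on_def by blast
  then have "norm (f x *\<^sub>R u) \<le> (M * norm u) * norm x" if "x \<in> X" for x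
    using mult_right_mono[of "norm (f x)" "M * norm x" "norm u"] that by (simp add: ac_simps)
  then show ?thesis
    using assms unfolding bounded_linear_on_def
    by (intro conjI ballI allI exI[of _ "M * norm u"]) (simp_all add: scaleR_add_left)
qed

lemma bdd_above_op_norm_on:
  assumes "bounded_linear_on X f"
  shows "bdd_above ((\<lambda>x. norm (f x)) ` (X \<inter> cball 0 1))"
proof -
  obtain M where M: "\<And>x. x \<in> X \<Longrightarrow> norm (f x) \<le> M * norm x"
    using assms unfolding bounded_linear_on_def by blast
  have "norm (f x) \<le> max M 0" if "x \<in> X \<inter> cball 0 1" for x
  proof -
    have "norm (f x) \<le> max M 0 * norm x" using M[of x] that by (smt (verit) mult_right_mono norm_ge_zero IntD1)
    also have "\<dots> \<le> max M 0" using that by (intro mult_left_le) auto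
    finally show ?thesis .
  qed
  then show ?thesis by (intro bdd_aboveI2)
qed

lemma norm_le_op_norm_on:
  assumes "bounded_linear_on X f" "x \<in> X" "norm x \<le> 1"
  shows "norm (f x) \<le> op_norm_on X f"
  unfolding op_norm_on_def by (rule cSUP_upper[OF _ bdd_above_op_norm_on[OF assms(1)]]) (use assms in auto)

lemma norm_le_op_norm_on_mult:
  assumes f: "bounded_linear_on X f" and X: "subspace X" and x: "x \<in> X"
  shows "norm (f x) \<le> op_norm_on X f * norm x"
proof (cases "x = 0")
  case True
  then show ?thesis using bounded_linear_on_scaleR[OF f x, of 0] by simp
next
  case False
  have "(1 / norm x) *\<^sub>R x \<in> X" using X x by (simp add: subspace_scale)
  then have "norm (f ((1 / norm x) *\<^sub>R x)) \<le> op_norm_on X f"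
    using False by (intro norm_le_op_norm_on[OF f]) auto
  then show ?thesis
    using False bounded_linear_on_scaleR[OF f x] by (simp add: divide_le_eq mult.commute)
qed

lemma op_norm_on_pos:
  assumes X: "subspace X" and f: "bounded_linear_on X f" and "x \<in> X" "f x \<noteq> 0"
  shows "0 < op_norm_on X f"
proof -
  have "0 < norm (f x)" using assms(4) by simp
  also have "\<dots> \<le> op_norm_on X f * norm x" by (rule norm_le_op_norm_on_mult[OF f X assms(3)])
  finally show ?thesis by (simp add: zero_less_mult_iff)
qed

lemma op_norm_on_approx:
  fixes f :: "'y::real_normed_vector \<Rightarrow> real"
  assumes f: "bounded_linear_on X f" and X: "subspace X" and "e > 0"
  shows "\<exists>x\<in>X. norm x \<le> 1 \<and> op_norm_on X f - e < f x"
proof -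
  have "X \<inter> cball 0 1 \<noteq> {}" using subspace_0[OF X] by auto
  moreover have "op_norm_on X f - e < op_norm_on X f" using \<open>e > 0\<close> by simp
  ultimately have "\<exists>x\<in>X \<inter> cball 0 1. op_norm_on X f - e < norm (f x)"
    unfolding op_norm_on_def using less_cSUP_iff[OF _ bdd_above_op_norm_on[OF f]] by blast
  then obtain x where x: "x \<in> X" "norm x \<le> 1" "op_norm_on X f - e < \<bar>f x\<bar>" by auto
  show ?thesis
  proof (cases "0 \<le> f x")
    case True
    then show ?thesis using x by auto
  next
    case False
    then show ?thesis using x bounded_linear_on_minus[OF f x(1)] subspace_neg[OF X x(1)] by force
  qed
qed

lemma cSUP_eq_if_approx:
  fixes f :: "'a \<Rightarrow> real"
  assumes "A \<noteq> {}" "\<And>x. x \<in> A \<Longrightarrow> f x \<le> M" "\<And>e. e > 0 \<Longrightarrow> \<exists>x\<in>A. M - e < f x"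
  shows "(SUP x\<in>A. f x) = M"
proof (rule antisym)
  show "(SUP x\<in>A. f x) \<le> M" by (rule cSUP_least) (use assms(1,2) in auto)
  have bdd: "bdd_above (f ` A)" using assms(2) by (intro bdd_aboveI2)
  show "M \<le> (SUP x\<in>A. f x)"
  proof (rule field_le_epsilon)
    fix e :: real assume "e > 0"
    then obtain x where "x \<in> A" "M - e < f x" using assms(3) by blast
    then show "M \<le> (SUP x\<in>A. f x) + e" using cSUP_upper[OF _ bdd, of x] by linarith
  qed
qed

lemma daugavet_pair_rank_one:
  fixes f :: "'y::real_normed_vector \<Rightarrow> real"
  assumes X: "subspace X" and D: "daugavet_pair X" and f: "bounded_linear_on X f"
    and x0: "x0 \<in> X" "f x0 \<noteq> 0" and u: "norm u = 1"
  shows "op_norm_on X (\<lambda>x. x + f x *\<^sub>R u) = 1 + op_norm_on X f"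
proof -
  have "(\<lambda>x. f x *\<^sub>R u) ` X = span {u}"
  proof
    show "(\<lambda>x. f x *\<^sub>R u) ` X \<subseteq> span {u}" by (auto simp: span_singleton)
    show "span {u} \<subseteq> (\<lambda>x. f x *\<^sub>R u) ` X"
    proof
      fix v assume "v \<in> span {u}"
      then obtain t where "v = t *\<^sub>R u" by (auto simp: span_singleton)
      then have "v = f ((t / f x0) *\<^sub>R x0) *\<^sub>R u"
        using bounded_linear_on_scaleR[OF f x0(1)] x0(2) by simp
      moreover have "(t / f x0) *\<^sub>R x0 \<in> X" using X x0(1) by (simp add: subspace_scale)
      ultimately show "v \<in> (\<lambda>x. f x *\<^sub>R u) ` X" by blast
    qed
  qed
  moreover have "u \<noteq> 0" using u by auto
  then have "dim (span {u}) = 1"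
    using dim_span_eq_card_independent[of "{u}"] dependent_single[of u] by simp
  ultimately have "dim ((\<lambda>x. f x *\<^sub>R u) ` X) = 1" by simp
  then have "op_norm_on X (\<lambda>x. x + f x *\<^sub>R u) = 1 + op_norm_on X (\<lambda>x. f x *\<^sub>R u)"
    using D bounded_linear_on_scaleR_const[OF f] unfolding daugavet_pair_def by blast
  also have "op_norm_on X (\<lambda>x. f x *\<^sub>R u) = op_norm_on X f"
    unfolding op_norm_on_def using u by simp
  finally show ?thesis .
qed

lemma daugavet_norming_point:
  fixes psi :: "'y::real_normed_vector \<Rightarrow> real"
  assumes X: "subspace X" and D: "daugavet_pair X" and psi: "bounded_linear_on X psi"
    and n: "0 < op_norm_on X psi" and u: "norm u = 1" and "0 < b"
  obtains x and k :: "'y \<Rightarrow>\<^sub>L real" where "x \<in> X" "norm x \<le> 1" "0 \<le> psi x" "norm k \<le> 1"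
    "1 + op_norm_on X psi - b < blinfun_apply k x + psi x * blinfun_apply k u"
proof -
  let ?J = "\<lambda>x. x + psi x *\<^sub>R u"
  obtain x0 where x0: "x0 \<in> X" "0 < psi x0"
    using op_norm_on_approx[OF psi X n] by auto
  have J: "bounded_linear_on X ?J"
    by (intro bounded_linear_on_plus bounded_linear_on_id bounded_linear_on_scaleR_const psi)
  have "1 + op_norm_on X psi - b < op_norm_on X ?J"
    using daugavet_pair_rank_one[OF X D psi x0(1) _ u] x0(2) \<open>0 < b\<close> by simp
  moreover have "X \<inter> cball 0 1 \<noteq> {}" using subspace_0[OF X] by auto
  ultimately obtain x where x: "x \<in> X" "norm x \<le> 1" "1 + op_norm_on X psi - b < norm (?J x)"
    unfolding op_norm_on_def using less_cSUP_iff[OF _ bdd_above_op_norm_on[OF J]] by auto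
  have "\<exists>x'\<in>X. norm x' \<le> 1 \<and> 0 \<le> psi x' \<and> 1 + op_norm_on X psi - b < norm (?J x')"
  proof (cases "0 \<le> psi x")
    case False
    have "?J (- x) = - ?J x" using bounded_linear_on_minus[OF psi x(1)] by simp
    then have "norm (?J (- x)) = norm (?J x)" by (metis norm_minus_cancel)
    then show ?thesis
      using False x bounded_linear_on_minus[OF psi x(1)] subspace_neg[OF X x(1)]
      by (intro bexI[of _ "- x"]) simp_all
  qed (use x in auto)
  then obtain x' where x': "x' \<in> X" "norm x' \<le> 1" "0 \<le> psi x'" "1 + op_norm_on X psi - b < norm (?J x')"
    by blast
  obtain k :: "'y \<Rightarrow>\<^sub>L real" where "norm k \<le> 1" "blinfun_apply k (?J x') = norm (?J x')"
    using exists_norming_functional by blast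
  then show thesis
    using that[OF x'(1-3)] x'(4) by (simp add: blinfun.add_right blinfun.scaleR_right)
qed

definition slice :: "'y::real_normed_vector set \<Rightarrow> ('y \<Rightarrow> real) \<Rightarrow> real \<Rightarrow> 'y set" where
  "slice X f c = {x\<in>X. norm x \<le> 1 \<and> c < f x}"

lemma exists_unit_vector_multiple:
  fixes z x0 :: "'a::real_normed_vector"
  assumes "x0 \<noteq> 0"
  obtains u where "norm u = 1" "z = norm z *\<^sub>R u"
proof (cases "z = 0")
  case True
  then show thesis using assms by (intro that[of "(1 / norm x0) *\<^sub>R x0"]) auto
qed (intro that[of "(1 / norm z) *\<^sub>R z"], auto)

lemma norming_slice_estimate:
  fixes k :: "'y::real_normed_vector \<Rightarrow>\<^sub>L real"
  assumes k: "norm k \<le> 1" "0 < blinfun_apply k u" and x: "norm x \<le> 1"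
    and u: "norm u = 1" "z = norm z *\<^sub>R u"
    and b: "0 < b" "b < n" "b * (n + norm z) / n \<le> eta" and "p \<le> n"
    and slice: "1 + n - b < blinfun_apply k x + blinfun_apply k u * p"
  shows "n - b < p" "1 + norm z - eta < norm (x + z)"
proof -
  have k_le: "blinfun_apply k v \<le> norm v" for v
    using dual_ball_le_norm k(1) unfolding dual_ball_def by simp
  have kx: "blinfun_apply k x \<le> 1" and ku: "blinfun_apply k u \<le> 1" using k_le[of x] k_le[of u] x u(1) by auto
  have kup: "n - b < blinfun_apply k u * p" using slice kx by linarith
  then have "0 < p" using b k(2) by (smt (verit) mult_nonneg_nonpos)
  then have "blinfun_apply k u * p \<le> p" using k(2) ku by (simp add: mult_left_le_one_le)
  then show "n - b < p" using kup by linarith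
  have "blinfun_apply k u * p \<le> blinfun_apply k u * n" using k(2) \<open>p \<le> n\<close> by simp
  moreover have "blinfun_apply k u * n \<le> n" using k(2) ku b by (simp add: mult_left_le_one_le)
  ultimately have "1 - b < blinfun_apply k x" using slice by linarith
  moreover have "1 - b / n < blinfun_apply k u"
    using kup \<open>blinfun_apply k u * p \<le> blinfun_apply k u * n\<close> b by (simp add: field_simps)
  moreover have "1 + norm z - eta \<le> (1 - b) + norm z * (1 - b / n)"
    using b by (simp add: field_simps)
  ultimately have "1 + norm z - eta < blinfun_apply k x + norm z * blinfun_apply k u"
    by (smt (verit) mult_left_mono norm_ge_zero)
  also have "\<dots> = blinfun_apply k (x + z)"
    by (subst (2) u(2)) (simp add: blinfun.add_right blinfun.scaleR_right)
  also have "\<dots> \<le> norm (x + z)" by (rule k_le)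
  finally show "1 + norm z - eta < norm (x + z)" .
qed

text \<open>The subslice is cut by \<open>k + k(u) \<psi>\<close>, where \<open>k\<close> norms \<open>x1 + \<psi>(x1) u\<close> at a point \<open>x1\<close>
  supplied by the Daugavet property for the rank-one operator \<open>\<psi> \<otimes> u\<close>, and \<open>z\<close> is a multiple
  of \<open>u\<close>.\<close>

lemma daugavet_subslice:
  fixes psi :: "'y::real_normed_vector \<Rightarrow> real"
  assumes X: "subspace X" and D: "daugavet_pair X" and psi: "bounded_linear_on X psi"
    and c: "0 \<le> c" "slice X psi c \<noteq> {}" and eta: "0 < eta"
  shows "\<exists>psi' c'. bounded_linear_on X psi' \<and> 0 \<le> c' \<and> slice X psi' c' \<noteq> {} \<and>
           slice X psi' c' \<subseteq> slice X psi c \<inter> {x. 1 + norm z - eta < norm (x + z)}"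
proof -
  define n where "n = op_norm_on X psi"
  obtain x0 where x0: "x0 \<in> X" "norm x0 \<le> 1" "c < psi x0" using c(2) unfolding slice_def by auto
  have "c < n" using norm_le_op_norm_on[OF psi x0(1,2)] x0(3) unfolding n_def by simp
  then have "0 < n" using c(1) by linarith
  have "x0 \<noteq> 0" using x0(3) c(1) bounded_linear_on_scaleR[OF psi x0(1), of 0] by auto
  then obtain u where u: "norm u = 1" "z = norm z *\<^sub>R u" by (rule exists_unit_vector_multiple)
  define b where "b = min ((n - c) / 2) (eta * n / (n + norm z))"
  have nz: "0 < n + norm z" using \<open>0 < n\<close> by (simp add: add_pos_nonneg)
  have b_le: "b \<le> (n - c) / 2" "b \<le> eta * n / (n + norm z)" unfolding b_def by (rule min.cobounded1, rule min.cobounded2)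
  have "b * (n + norm z) \<le> eta * n" using b_le(2) nz by (simp add: le_divide_eq)
  then have b: "0 < b" "b < n - c" "b * (n + norm z) / n \<le> eta"
    using \<open>c < n\<close> \<open>0 < n\<close> eta nz b_le(1) unfolding b_def by (auto simp: divide_le_eq mult.commute)
  obtain x1 and k :: "'y \<Rightarrow>\<^sub>L real" where x1: "x1 \<in> X" "norm x1 \<le> 1" "0 \<le> psi x1" "norm k \<le> 1"
    "1 + n - b < blinfun_apply k x1 + psi x1 * blinfun_apply k u"
    using daugavet_norming_point[OF X D psi _ u(1) b(1)] \<open>0 < n\<close> unfolding n_def by metis
  have k_le: "blinfun_apply k v \<le> norm v" for v
    using dual_ball_le_norm x1(4) unfolding dual_ball_def by simp
  have psi_le: "psi x \<le> n" if "x \<in> X" "norm x \<le> 1" for x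
    using norm_le_op_norm_on[OF psi that] unfolding n_def by simp
  have "0 < blinfun_apply k u"
  proof -
    have "n - b < psi x1 * blinfun_apply k u"
      using x1(5) k_le[of x1] x1(2) psi_le[OF x1(1,2)] by linarith
    then show ?thesis using b(2) c(1) x1(3) by (smt (verit) mult_nonneg_nonpos)
  qed
  define psi' where "psi' x = blinfun_apply k x + psi x * blinfun_apply k u" for x
  have "bounded_linear_on X psi'"
    unfolding psi'_def
    using bounded_linear_on_plus[OF bounded_linear_on_blinfun[of X k]
        bounded_linear_on_scaleR_const[OF psi, of "blinfun_apply k u"]] by simp
  moreover have "x1 \<in> slice X psi' (1 + n - b)" using x1 unfolding slice_def psi'_def by simp
  moreover have "slice X psi' (1 + n - b) \<subseteq> slice X psi c \<inter> {x. 1 + norm z - eta < norm (x + z)}"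
  proof
    fix x assume "x \<in> slice X psi' (1 + n - b)"
    then have x: "x \<in> X" "norm x \<le> 1" "1 + n - b < blinfun_apply k x + blinfun_apply k u * psi x"
      unfolding slice_def psi'_def by (auto simp: mult.commute)
    have "b < n" using b(2) c(1) by linarith
    note est = norming_slice_estimate[OF x1(4) \<open>0 < blinfun_apply k u\<close> x(2) u b(1) this b(3)
        psi_le[OF x(1,2)] x(3)]
    then have "c < psi x" using b(2) by linarith
    then show "x \<in> slice X psi c \<inter> {x. 1 + norm z - eta < norm (x + z)}"
      using x est(2) unfolding slice_def by simp
  qed
  moreover have "0 \<le> 1 + n - b" using b(2) c(1) by linarith
  ultimately show ?thesis by blast
qed

lemma daugavet_subslice_finite:
  fixes psi :: "'y::real_normed_vector \<Rightarrow> real"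
  assumes X: "subspace X" and D: "daugavet_pair X" and "finite Z" and eta: "0 < eta"
  shows "bounded_linear_on X psi \<Longrightarrow> 0 \<le> c \<Longrightarrow> slice X psi c \<noteq> {} \<Longrightarrow>
    \<exists>psi' c'. bounded_linear_on X psi' \<and> 0 \<le> c' \<and> slice X psi' c' \<noteq> {} \<and>
      slice X psi' c' \<subseteq> slice X psi c \<inter> {x. \<forall>z\<in>Z. 1 + norm z - eta < norm (x + z)}"
  using \<open>finite Z\<close>
proof (induction Z arbitrary: psi c rule: finite_induct)
  case empty
  then show ?case by blast
next
  case (insert z Z)
  obtain psi1 c1 where 1: "bounded_linear_on X psi1" "0 \<le> c1" "slice X psi1 c1 \<noteq> {}"
    "slice X psi1 c1 \<subseteq> slice X psi c \<inter> {x. 1 + norm z - eta < norm (x + z)}"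
    using daugavet_subslice[OF X D insert.prems eta] by blast
  obtain psi2 c2 where 2: "bounded_linear_on X psi2" "0 \<le> c2" "slice X psi2 c2 \<noteq> {}"
    "slice X psi2 c2 \<subseteq> slice X psi1 c1 \<inter> {x. \<forall>z\<in>Z. 1 + norm z - eta < norm (x + z)}"
    using insert.IH[OF 1(1-3)] by blast
  show ?case using 1 2 by blast
qed

lemma daugavet_slice_points:
  fixes psi :: "'y::real_normed_vector \<Rightarrow> real"
  assumes X: "subspace X" and D: "daugavet_pair X" and Z: "finite Z" and eta: "0 < eta"
    and psi: "bounded_linear_on X psi" and n: "0 < op_norm_on X psi"
  shows "\<exists>x\<in>X. norm x \<le> 1 \<and> op_norm_on X psi - eta < psi x \<and>
    (\<forall>z\<in>Z. 1 + norm z - eta < norm (x + z))"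
proof -
  define c where "c = max 0 (op_norm_on X psi - eta)"
  have "0 \<le> c" unfolding c_def by simp
  moreover have "slice X psi c \<noteq> {}"
    using op_norm_on_approx[OF psi X, of "op_norm_on X psi - c"] n eta unfolding slice_def c_def by force
  ultimately obtain psi' c' where "slice X psi' c' \<noteq> {}"
    "slice X psi' c' \<subseteq> slice X psi c \<inter> {x. \<forall>z\<in>Z. 1 + norm z - eta < norm (x + z)}"
    using daugavet_subslice_finite[OF X D Z eta psi] by blast
  then show ?thesis unfolding slice_def c_def by fastforce
qed

section \<open>The pair (X, C(K))\<close>

lemma daugavet_points_near_extreme_points:
  fixes psi :: "'y::real_normed_vector \<Rightarrow> real" and S :: "('y \<Rightarrow>\<^sub>L real) set"
  assumes X: "subspace X" and D: "daugavet_pair X" and psi: "bounded_linear_on X psi"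
    and n: "0 < op_norm_on X psi" and eta: "0 < eta"
    and S: "finite S" "\<And>v. v \<in> S \<Longrightarrow> v extreme_point_of dual_ball"
    and U: "\<And>v. v \<in> S \<Longrightarrow> openin weak_star_topology (U v) \<and> v \<in> U v"
  shows "\<exists>x\<in>X. norm x \<le> 1 \<and> op_norm_on X psi - eta < psi x \<and>
    (\<forall>v\<in>S. \<exists>k. k extreme_point_of dual_ball \<and> k \<in> U v \<and> 1 - eta < blinfun_apply k x)"
proof -
  have "\<forall>v\<in>S. \<exists>y c. c < blinfun_apply v y \<and> (\<forall>k\<in>dual_ball. c < blinfun_apply k y \<longrightarrow> k \<in> U v)"
    using extreme_point_slice_subset_openin S(2) U by blast
  then obtain y c where yc: "\<And>v. v \<in> S \<Longrightarrow> c v < blinfun_apply v (y v)"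
    "\<And>v k. v \<in> S \<Longrightarrow> k \<in> dual_ball \<Longrightarrow> c v < blinfun_apply k (y v) \<Longrightarrow> k \<in> U v"
    by metis
  define et where "et = Min (insert eta ((\<lambda>v. blinfun_apply v (y v) - c v) ` S))"
  have et: "0 < et" "et \<le> eta" "\<And>v. v \<in> S \<Longrightarrow> et \<le> blinfun_apply v (y v) - c v"
    using S(1) yc(1) eta unfolding et_def by (auto simp: Min_gr_iff)
  obtain x where x: "x \<in> X" "norm x \<le> 1" "op_norm_on X psi - et < psi x"
    "\<And>z. z \<in> y ` S \<Longrightarrow> 1 + norm z - et < norm (x + z)"
    using daugavet_slice_points[OF X D _ et(1) psi n, of "y ` S"] S(1) by blast
  have "\<exists>k. k extreme_point_of dual_ball \<and> k \<in> U v \<and> 1 - eta < blinfun_apply k x" if v: "v \<in> S" for v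
  proof -
    obtain k where k: "k extreme_point_of dual_ball" "blinfun_apply k (x + y v) = norm (x + y v)"
      using exists_extreme_norming_functional by blast
    have kB: "k \<in> dual_ball" and vB: "v \<in> dual_ball"
      using k(1) S(2)[OF v] unfolding extreme_point_of_def by auto
    have "blinfun_apply k x + blinfun_apply k (y v) = norm (x + y v)"
      using k(2) by (simp add: blinfun.add_right)
    moreover have "blinfun_apply k x \<le> 1" using dual_ball_le_norm[OF kB, of x] x(2) by simp
    moreover have "blinfun_apply k (y v) \<le> norm (y v)" "blinfun_apply v (y v) \<le> norm (y v)"
      using dual_ball_le_norm kB vB by auto
    moreover have "1 + norm (y v) - et < norm (x + y v)" using x(4) v by blast
    ultimately have "1 - et < blinfun_apply k x" "c v < blinfun_apply k (y v)"
      using et(3)[OF v] by linarith+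
    then show ?thesis using k(1) yc(2)[OF v kB] et(2) by auto
  qed
  then show ?thesis using x et(2) by (intro bexI[of _ x]) auto
qed

lemma slice_point_near_ext_closure:
  fixes psi :: "'y::real_normed_vector \<Rightarrow> real"
  assumes X: "subspace X" and D: "daugavet_pair X" and psi: "bounded_linear_on X psi"
    and n: "0 < op_norm_on X psi" and eta: "0 < eta"
    and k0: "k0 \<in> ext_closure_dual_ball" and U: "openin weak_star_topology U" "k0 \<in> U"
  shows "\<exists>x\<in>X. norm x \<le> 1 \<and> op_norm_on X psi - eta < psi x \<and>
    (\<exists>k\<in>U \<inter> ext_closure_dual_ball. 1 - eta < blinfun_apply k x)"
proof -
  obtain e where e: "e extreme_point_of dual_ball" "e \<in> U"
    using k0 U unfolding ext_closure_dual_ball_def in_closure_of by blast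
  then obtain x where "x \<in> X" "norm x \<le> 1" "op_norm_on X psi - eta < psi x"
    and "\<exists>k. k extreme_point_of dual_ball \<and> k \<in> U \<and> 1 - eta < blinfun_apply k x"
    using daugavet_points_near_extreme_points[OF X D psi n eta, of "{e}" "\<lambda>_. U"] U by auto
  moreover have "{e. e extreme_point_of dual_ball} \<subseteq> ext_closure_dual_ball"
    unfolding ext_closure_dual_ball_def by (rule closure_of_subset) simp
  ultimately show ?thesis by blast
qed

lemma convex_combination_weak_star_box:
  fixes kf :: "('y::real_normed_vector \<Rightarrow>\<^sub>L real) \<Rightarrow> ('y \<Rightarrow>\<^sub>L real)"
  assumes a: "\<And>v. v \<in> S \<Longrightarrow> 0 \<le> a v" "sum a S = 1"
    and kf: "\<And>v. v \<in> S \<Longrightarrow> kf v \<in> weak_star_box v W d" and "d < d'"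
  shows "(\<Sum>v\<in>S. a v *\<^sub>R kf v) \<in> weak_star_box (\<Sum>v\<in>S. a v *\<^sub>R v) W d'"
  unfolding weak_star_box_def
proof (intro CollectI ballI)
  fix w assume w: "w \<in> W"
  have "\<bar>blinfun_apply (\<Sum>v\<in>S. a v *\<^sub>R kf v) w - blinfun_apply (\<Sum>v\<in>S. a v *\<^sub>R v) w\<bar> =
      \<bar>\<Sum>v\<in>S. a v * (blinfun_apply (kf v) w - blinfun_apply v w)\<bar>"
    by (simp add: blinfun.sum_left blinfun.scaleR_left sum_subtractf[symmetric] right_diff_distrib)
  also have "\<dots> \<le> (\<Sum>v\<in>S. a v * \<bar>blinfun_apply (kf v) w - blinfun_apply v w\<bar>)"
    using a(1) by (intro order_trans[OF sum_abs] sum_mono) (simp add: abs_mult)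
  also have "\<dots> \<le> (\<Sum>v\<in>S. a v * d)"
    using kf w a(1) unfolding weak_star_box_def by (intro sum_mono mult_left_mono) (auto intro: less_imp_le)
  also have "\<dots> < d'" unfolding sum_distrib_right[symmetric] a(2) using \<open>d < d'\<close> by simp
  finally show "\<bar>blinfun_apply (\<Sum>v\<in>S. a v *\<^sub>R kf v) w - blinfun_apply (\<Sum>v\<in>S. a v *\<^sub>R v) w\<bar> < d'" .
qed

lemma slice_point_near_dual_ball:
  fixes psi :: "'y::real_normed_vector \<Rightarrow> real"
  assumes X: "subspace X" and D: "daugavet_pair X" and psi: "bounded_linear_on X psi"
    and n: "0 < op_norm_on X psi" and eta: "0 < eta"
    and k0: "k0 \<in> dual_ball" and U: "openin weak_star_topology U" "k0 \<in> U"
  shows "\<exists>x\<in>X. norm x \<le> 1 \<and> op_norm_on X psi - eta < psi x \<and>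
    (\<exists>k\<in>U \<inter> dual_ball. 1 - eta < blinfun_apply k x)"
proof -
  have "k0 \<in> weak_star_topology closure_of (convex hull {e. e extreme_point_of dual_ball})"
    using Krein_Milman_dual_ball k0 by blast
  then obtain m where m: "m \<in> convex hull {e. e extreme_point_of dual_ball}" "m \<in> U"
    using U unfolding in_closure_of by blast
  obtain W d where W: "finite W" "0 < d" "weak_star_box m W d \<subseteq> U"
    using weak_star_box_subset_openin[OF U(1) m(2)] .
  obtain S a where S: "finite S" "S \<subseteq> {e. e extreme_point_of dual_ball}" "\<forall>v\<in>S. 0 \<le> a v"
    "sum a S = 1" "(\<Sum>v\<in>S. a v *\<^sub>R v) = m"
    using m(1) unfolding convex_hull_explicit by blast
  have "openin weak_star_topology (weak_star_box v W (d / 2)) \<and> v \<in> weak_star_box v W (d / 2)" for v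
    using openin_weak_star_box[OF W(1), of v "d / 2"] W(2) by (simp add: weak_star_box_def)
  moreover have "0 < eta / 2" using eta by simp
  moreover have "\<And>v. v \<in> S \<Longrightarrow> v extreme_point_of dual_ball" using S(2) by blast
  ultimately obtain x where x: "x \<in> X" "norm x \<le> 1" "op_norm_on X psi - eta / 2 < psi x"
    and near: "\<forall>v\<in>S. \<exists>k. k extreme_point_of dual_ball \<and> k \<in> weak_star_box v W (d / 2) \<and>
      1 - eta / 2 < blinfun_apply k x"
    using daugavet_points_near_extreme_points[OF X D psi n _ S(1), of "eta / 2" "\<lambda>v. weak_star_box v W (d / 2)"]
    by blast
  obtain kf where "\<forall>v\<in>S. kf v extreme_point_of dual_ball \<and> kf v \<in> weak_star_box v W (d / 2) \<and>
      1 - eta / 2 < blinfun_apply (kf v) x"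
    using bchoice[OF near] by blast
  then have kf: "\<And>v. v \<in> S \<Longrightarrow> kf v \<in> dual_ball \<inter> (\<lambda>k. blinfun_apply k x) -` {1 - eta / 2..}"
    "\<And>v. v \<in> S \<Longrightarrow> kf v \<in> weak_star_box v W (d / 2)"
    unfolding extreme_point_of_def by fastforce+
  define k where "k = (\<Sum>v\<in>S. a v *\<^sub>R kf v)"
  have "k \<in> dual_ball \<inter> (\<lambda>k. blinfun_apply k x) -` {1 - eta / 2..}"
    unfolding k_def using S(3) kf(1)
    by (intro convex_sum[OF S(1) compactin_convex_dual_ball_slab(2) S(4)]) (auto simp: convex_real_interval)
  moreover have "k \<in> weak_star_box m W d"
    unfolding k_def S(5)[symmetric]
    by (rule convex_combination_weak_star_box[where d = "d / 2"]) (use S(3,4) kf(2) W(2) in auto)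
  ultimately have "k \<in> U \<inter> dual_ball" "1 - eta < blinfun_apply k x" using W(3) eta by auto
  moreover have "op_norm_on X psi - eta < psi x" using x(3) eta by linarith
  ultimately show ?thesis using x(1,2) by blast
qed

lemma slice_point_near:
  fixes psi :: "'y::real_normed_vector \<Rightarrow> real"
  assumes "subspace X" "daugavet_pair X" "bounded_linear_on X psi" "0 < op_norm_on X psi" "0 < eta"
    and "K = dual_ball \<or> K = ext_closure_dual_ball"
    and "k0 \<in> K" "openin weak_star_topology U" "k0 \<in> U"
  shows "\<exists>x\<in>X. norm x \<le> 1 \<and> op_norm_on X psi - eta < psi x \<and> (\<exists>k\<in>U \<inter> K. 1 - eta < blinfun_apply k x)"
  using assms(6)
proof
  assume "K = dual_ball"
  then show ?thesis using slice_point_near_dual_ball[OF assms(1-5) _ assms(8,9)] assms(7) by simp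
next
  assume "K = ext_closure_dual_ball"
  then show ?thesis using slice_point_near_ext_closure[OF assms(1-5) _ assms(8,9)] assms(7) by simp
qed

lemma CK_norm_rank_one:
  assumes "k0 \<in> K" "0 < g k0" "\<And>k. k \<in> K \<Longrightarrow> \<bar>g k\<bar> \<le> g k0" "\<And>k. k \<in> K \<Longrightarrow> f k = c * g k"
  shows "CK_norm K f = \<bar>c\<bar> * g k0"
  unfolding CK_norm_def
proof (rule cSup_eq_maximum)
  show "\<bar>c\<bar> * g k0 \<in> (\<lambda>k. \<bar>f k\<bar>) ` K"
    using assms(1,2,4) by (intro image_eqI[of _ _ k0]) (auto simp: abs_mult)
  show "y \<le> \<bar>c\<bar> * g k0" if "y \<in> (\<lambda>k. \<bar>f k\<bar>) ` K" for y
    using that assms(3,4) by (auto simp: abs_mult intro: mult_left_mono)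
qed

lemma bounded_linear_on_rank_one_coefficient:
  assumes X: "subspace X" and T: "bounded_linear_into_CK X K T"
    and g: "k0 \<in> K" "0 < g k0" "\<And>k. k \<in> K \<Longrightarrow> \<bar>g k\<bar> \<le> g k0"
    and rep: "\<And>x k. x \<in> X \<Longrightarrow> k \<in> K \<Longrightarrow> T x k = phi x * g k"
  shows "bounded_linear_on X phi"
proof -
  have phi: "phi x = T x k0 / g k0" if "x \<in> X" for x using rep[OF that g(1)] g(2) by simp
  obtain M where M: "\<And>x. x \<in> X \<Longrightarrow> CK_norm K (T x) \<le> M * norm x"
    using T unfolding bounded_linear_into_CK_def by blast
  have "norm (phi x) \<le> (M / g k0) * norm x" if "x \<in> X" for x
    using M[OF that] CK_norm_rank_one[where g = g and f = "T x" and c = "phi x", OF g rep[OF that]] g(2) by (simp add: field_simps)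
  moreover have "phi (x + y) = phi x + phi y" "phi (c *\<^sub>R x) = c * phi x" if "x \<in> X" "y \<in> X" for x y c
    using T g(1) phi subspace_add[OF X] subspace_scale[OF X] that unfolding bounded_linear_into_CK_def
    by (auto simp: add_divide_distrib)
  ultimately show ?thesis unfolding bounded_linear_on_def by (auto intro!: exI[of _ "M / g k0"])
qed

lemma rank_one_into_CK_factorization:
  fixes T :: "'y::real_normed_vector \<Rightarrow> ('y \<Rightarrow>\<^sub>L real) \<Rightarrow> real"
  assumes X: "subspace X" and K: "compactin weak_star_topology K"
    and T: "bounded_linear_into_CK X K T" "rank_one_into_CK X K T"
  obtains phi g k0 where "bounded_linear_on X phi" "\<exists>x\<in>X. phi x \<noteq> 0"
    "continuous_map (subtopology weak_star_topology K) euclideanreal g"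
    "k0 \<in> K" "0 < g k0" "\<And>k. k \<in> K \<Longrightarrow> \<bar>g k\<bar> \<le> g k0"
    "\<And>x k. x \<in> X \<Longrightarrow> k \<in> K \<Longrightarrow> T x k = phi x * g k"
proof -
  obtain x1 k1 where x1: "x1 \<in> X" "k1 \<in> K" "T x1 k1 \<noteq> 0"
    using T(2) unfolding rank_one_into_CK_def by blast
  obtain g0 where g0: "continuous_map (subtopology weak_star_topology K) euclideanreal g0"
    and rep0: "\<And>x. x \<in> X \<Longrightarrow> \<exists>c. \<forall>k\<in>K. T x k = c * g0 k"
    using T(2) unfolding rank_one_into_CK_def CK_def by blast
  have "compactin (subtopology weak_star_topology K) K" using K by (simp add: compactin_subtopology)
  then obtain k0 where k0: "k0 \<in> K" "\<And>k. k \<in> K \<Longrightarrow> \<bar>g0 k\<bar> \<le> \<bar>g0 k0\<bar>"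
    using compactin_attains_sup[OF _ _ continuous_map_real_abs[OF g0]] x1(2) by blast
  have "g0 k1 \<noteq> 0" using rep0[OF x1(1)] x1 by force
  then have "g0 k0 \<noteq> 0" using k0(2)[OF x1(2)] by auto
  define g where "g k = sgn (g0 k0) * g0 k" for k
  have g_pos: "0 < g k0" and g_le: "\<And>k. k \<in> K \<Longrightarrow> \<bar>g k\<bar> \<le> g k0"
    using \<open>g0 k0 \<noteq> 0\<close> k0(2) unfolding g_def by (auto simp: abs_mult sgn_if)
  define phi where "phi x = T x k0 / g k0" for x
  have rep: "T x k = phi x * g k" if xk: "x \<in> X" "k \<in> K" for x k
  proof -
    obtain c where c: "\<forall>k\<in>K. T x k = c * g0 k" using rep0[OF xk(1)] by blast
    have "phi x = c * sgn (g0 k0)"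
      unfolding phi_def g_def using c k0(1) \<open>g0 k0 \<noteq> 0\<close> by (simp add: sgn_if)
    then show ?thesis using c xk(2) \<open>g0 k0 \<noteq> 0\<close> unfolding g_def by (simp add: sgn_if)
  qed
  have "bounded_linear_on X phi"
    using bounded_linear_on_rank_one_coefficient[OF X T(1) k0(1) g_pos g_le rep] .
  moreover have "phi x1 \<noteq> 0" using rep[OF x1(1,2)] x1(3) by auto
  moreover have "continuous_map (subtopology weak_star_topology K) euclideanreal g"
    unfolding g_def by (intro continuous_map_real_mult continuous_map_const[THEN iffD2] g0) simp
  ultimately show thesis using that k0(1) g_pos g_le rep x1(1) by blast
qed

lemma op_norm_into_CK_rank_one:
  assumes X: "subspace X" and phi: "bounded_linear_on X phi"
    and g: "k0 \<in> K" "0 < g k0" "\<And>k. k \<in> K \<Longrightarrow> \<bar>g k\<bar> \<le> g k0"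
    and T: "\<And>x k. x \<in> X \<Longrightarrow> k \<in> K \<Longrightarrow> T x k = phi x * g k"
  shows "op_norm_into_CK X K T = op_norm_on X phi * g k0"
proof -
  have "CK_norm K (T x) = \<bar>phi x\<bar> * g k0" if "x \<in> X" for x
    using CK_norm_rank_one[where g = g and f = "T x" and c = "phi x", OF g T[OF that]] .
  then have "op_norm_into_CK X K T = (SUP x\<in>X \<inter> cball 0 1. \<bar>phi x\<bar> * g k0)"
    unfolding op_norm_into_CK_def by (intro SUP_cong) auto
  also have "\<dots> = op_norm_on X phi * g k0"
  proof (rule cSUP_eq_if_approx)
    show "X \<inter> cball 0 1 \<noteq> {}" using subspace_0[OF X] by auto
    show "\<bar>phi x\<bar> * g k0 \<le> op_norm_on X phi * g k0" if "x \<in> X \<inter> cball 0 1" for x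
      using norm_le_op_norm_on[OF phi] that g(2) by (auto intro: mult_right_mono)
  next
    fix e :: real assume "0 < e"
    then obtain x where x: "x \<in> X" "norm x \<le> 1" "op_norm_on X phi - e / g k0 < phi x"
      using op_norm_on_approx[OF phi X, of "e / g k0"] g(2) by auto
    then have "op_norm_on X phi * g k0 - e < phi x * g k0"
      using g(2) by (simp add: field_simps)
    also have "\<dots> \<le> \<bar>phi x\<bar> * g k0" using g(2) by (intro mult_right_mono) auto
    finally have "op_norm_on X phi * g k0 - e < \<bar>phi x\<bar> * g k0" .
    then show "\<exists>x\<in>X \<inter> cball 0 1. op_norm_on X phi * g k0 - e < \<bar>phi x\<bar> * g k0"
      using x by auto
  qed
  finally show ?thesis .
qed


lemma abs_id_plus_rank_one_le:
  assumes K: "K \<subseteq> dual_ball" and phi: "bounded_linear_on X phi"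
    and g: "\<And>k. k \<in> K \<Longrightarrow> \<bar>g k\<bar> \<le> g k0" and T: "\<And>x k. x \<in> X \<Longrightarrow> k \<in> K \<Longrightarrow> T x k = phi x * g k"
    and x: "x \<in> X" "norm x \<le> 1" and k: "k \<in> K"
  shows "\<bar>blinfun_apply k x + T x k\<bar> \<le> 1 + op_norm_on X phi * g k0"
proof -
  have "k \<in> dual_ball" using K k by blast
  then have "\<bar>blinfun_apply k x\<bar> \<le> norm x" by (simp add: dual_ball_iff)
  then have "\<bar>blinfun_apply k x\<bar> \<le> 1" using x(2) by linarith
  moreover have "\<bar>phi x\<bar> * \<bar>g k\<bar> \<le> op_norm_on X phi * g k0"
    using norm_le_op_norm_on[OF phi x] g[OF k] by (intro mult_mono) auto
  moreover have "\<bar>blinfun_apply k x + T x k\<bar> \<le> \<bar>blinfun_apply k x\<bar> + \<bar>phi x\<bar> * \<bar>g k\<bar>"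
    using abs_triangle_ineq[of "blinfun_apply k x" "T x k"] T[OF x(1) k] by (simp add: abs_mult)
  ultimately show ?thesis by linarith
qed

lemma CK_norm_id_plus_rank_one_approx:
  assumes X: "subspace X" and D: "daugavet_pair X" and K: "K = dual_ball \<or> K = ext_closure_dual_ball"
    and phi: "bounded_linear_on X phi" "0 < op_norm_on X phi"
    and g: "continuous_map (subtopology weak_star_topology K) euclideanreal g"
      "k0 \<in> K" "0 < g k0" "\<And>k. k \<in> K \<Longrightarrow> \<bar>g k\<bar> \<le> g k0"
    and T: "\<And>x k. x \<in> X \<Longrightarrow> k \<in> K \<Longrightarrow> T x k = phi x * g k" and "0 < e"
  shows "\<exists>x\<in>X \<inter> cball 0 1. 1 + op_norm_on X phi * g k0 - e < CK_norm K (\<lambda>k. blinfun_apply k x + T x k)"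
proof -
  define n where "n = op_norm_on X phi"
  define N where "N = g k0"
  define ep where "ep = min (min n N) (e / (1 + n + N))"
  have "0 < 1 + n + N" using phi(2) g(3) unfolding n_def N_def by simp
  have ep_le: "ep \<le> n" "ep \<le> N" "ep \<le> e / (1 + n + N)"
    unfolding ep_def by (rule min.coboundedI1[OF min.cobounded1], rule min.coboundedI1[OF min.cobounded2],
        rule min.cobounded2)
  have ep: "0 < ep" "ep * (1 + n + N) \<le> e"
    using phi(2) g(3) \<open>0 < e\<close> \<open>0 < 1 + n + N\<close> ep_le(3) unfolding ep_def n_def N_def
    by (simp_all add: le_divide_eq)
  have "openin (subtopology weak_star_topology K) {k \<in> K. g k \<in> {N - ep<..}}"
    using openin_continuous_map_preimage[OF g(1), of "{N - ep<..}"] by simp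
  then obtain U where U: "openin weak_star_topology U" "{k \<in> K. N - ep < g k} = U \<inter> K"
    unfolding openin_subtopology by auto
  have "N - ep < g k0" using ep(1) unfolding N_def by simp
  then have "k0 \<in> U" using U(2) g(2) by blast
  then obtain x k where x: "x \<in> X" "norm x \<le> 1" "n - ep < phi x"
    and k: "k \<in> U \<inter> K" "1 - ep < blinfun_apply k x"
    using slice_point_near[OF X D phi ep(1) K g(2) U(1)] unfolding n_def by blast
  have "N - ep < g k" using U(2) k(1) by blast
  then have "(n - ep) * (N - ep) \<le> phi x * g k"
    using x(3) ep_le by (intro mult_mono) auto
  moreover have "n * N - ep * (1 + n + N) + ep \<le> (n - ep) * (N - ep)"
    by (simp add: algebra_simps)
  moreover have "T x k = phi x * g k" using T[OF x(1)] k(1) by blast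
  ultimately have "1 + n * N - e < blinfun_apply k x + T x k"
    using k(2) ep(2) by linarith
  also have "\<dots> \<le> CK_norm K (\<lambda>k. blinfun_apply k x + T x k)"
  proof -
    have "K \<subseteq> dual_ball" using K ext_closure_dual_ball_subset by auto
    have "bdd_above ((\<lambda>k. \<bar>blinfun_apply k x + T x k\<bar>) ` K)"
      by (rule bdd_aboveI2[where M = "1 + op_norm_on X phi * g k0"])
         (rule abs_id_plus_rank_one_le[where g = g and T = T, OF \<open>K \<subseteq> dual_ball\<close> phi(1) g(4) T x(1,2)])
    then show ?thesis unfolding CK_norm_def using k(1) by (intro cSUP_upper2) auto
  qed
  finally show ?thesis using x unfolding n_def N_def by auto
qed

lemma op_norm_into_CK_id_plus_rank_one:
  assumes X: "subspace X" and D: "daugavet_pair X" and K: "K = dual_ball \<or> K = ext_closure_dual_ball"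
    and phi: "bounded_linear_on X phi" "\<exists>x\<in>X. phi x \<noteq> 0"
    and g: "continuous_map (subtopology weak_star_topology K) euclideanreal g"
      "k0 \<in> K" "0 < g k0" "\<And>k. k \<in> K \<Longrightarrow> \<bar>g k\<bar> \<le> g k0"
    and T: "\<And>x k. x \<in> X \<Longrightarrow> k \<in> K \<Longrightarrow> T x k = phi x * g k"
  shows "op_norm_into_CK X K (\<lambda>x k. blinfun_apply k x + T x k) = 1 + op_norm_on X phi * g k0"
  unfolding op_norm_into_CK_def
proof (rule cSUP_eq_if_approx)
  show "X \<inter> cball 0 1 \<noteq> {}" using subspace_0[OF X] by auto
  have "K \<subseteq> dual_ball" using K ext_closure_dual_ball_subset by auto
  show "CK_norm K (\<lambda>k. blinfun_apply k x + T x k) \<le> 1 + op_norm_on X phi * g k0"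
    if "x \<in> X \<inter> cball 0 1" for x
    unfolding CK_norm_def
  proof (rule cSUP_least)
    show "K \<noteq> {}" using g(2) by blast
    show "\<bar>blinfun_apply k x + T x k\<bar> \<le> 1 + op_norm_on X phi * g k0" if "k \<in> K" for k
      using abs_id_plus_rank_one_le[where g = g and T = T, OF \<open>K \<subseteq> dual_ball\<close> phi(1) g(4) T]
        \<open>x \<in> X \<inter> cball 0 1\<close> that by simp
  qed
  have "0 < op_norm_on X phi" using op_norm_on_pos[OF X phi(1)] phi(2) by blast
  then show "\<exists>x\<in>X \<inter> cball 0 1. 1 + op_norm_on X phi * g k0 - e < CK_norm K (\<lambda>k. blinfun_apply k x + T x k)"
    if "0 < e" for e
    using CK_norm_id_plus_rank_one_approx[OF X D K phi(1) _ g T that] by blast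
qed

theorem mainTheorem6:
  fixes X :: "'y::banach set" and K :: "('y \<Rightarrow>\<^sub>L real) set"
  assumes "closed X" and "subspace X"
    and "daugavet_pair X"
    and "K = dual_ball \<or> K = ext_closure_dual_ball"
  shows "daugavet_pair_CK X K"
  unfolding daugavet_pair_CK_def
proof (intro allI impI)
  fix T assume T: "bounded_linear_into_CK X K T \<and> rank_one_into_CK X K T"
  have "compactin weak_star_topology K"
    using assms(4) Banach_Alaoglu compactin_ext_closure_dual_ball by auto
  from rank_one_into_CK_factorization[OF assms(2) this conjunct1[OF T] conjunct2[OF T]]
  obtain phi g k0 where phi: "bounded_linear_on X phi" "\<exists>x\<in>X. phi x \<noteq> 0"
    and g: "continuous_map (subtopology weak_star_topology K) euclideanreal g"
      "k0 \<in> K" "0 < g k0" "\<And>k. k \<in> K \<Longrightarrow> \<bar>g k\<bar> \<le> g k0"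
    and T: "\<And>x k. x \<in> X \<Longrightarrow> k \<in> K \<Longrightarrow> T x k = phi x * g k"
    by blast
  show "op_norm_into_CK X K (\<lambda>x k. blinfun_apply k x + T x k) = 1 + op_norm_into_CK X K T"
    using op_norm_into_CK_id_plus_rank_one[where g = g and T = T, OF assms(2-4) phi g T]
      op_norm_into_CK_rank_one[where g = g and T = T, OF assms(2) phi(1) g(2-4) T] by simp
qed

end
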